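(* Under the assumptions of the Error Estimate Theorem (standing assumptions (A); $\mathcal D$ a mass-lumped version of a Gradient Discretisation $\mathcal D_*$; $u$ a solution of (GS) for $\mathcal D$; $\bar u$ the solution of (W)), define \[ \alpha_{\mathcal D,\mathcal D_*}=\max_{v\in X_{\mathcal D,0}\setminus\{0\}}\frac{\|\Pi_{\mathcal D}v-\Pi_{\mathcal D_*}v\|_{L^2}}{\|\nabla_{\mathcal D}v\|_{L^2}} \] and let $\mathcal I_{\mathcal D}\zeta(\bar u)\in X_{\mathcal D,0}$ be a minimiser of $v\mapsto\|\nabla_{\mathcal D}v-\nabla\zeta(\bar u)\|_{L^2}+\|\Pi_{\mathcal D}v-\zeta(\bar u)\|_{L^2}$. Then \[ \begin{aligned} \|\nabla_{\mathcal D}[\mathcal I_{\mathcal D}\zeta(\bar u)-\zeta(u)]\|_{L^2}\le C\Big(&W_{\mathcal D_*}(\Lambda\nabla\zeta(\bar u)+F)+S_{\mathcal D}(\zeta(\bar u))+\alpha_{\mathcal D,\mathcal D_*}+\|\beta(Q_{\mathcal D}\bar u)-\beta(\bar u)\|_{L^2}\\&+\|Q_{\mathcal D}f-f\|_{L^2}+\big(S_{\mathcal D}(\zeta(\bar u))+\|\zeta(\bar u)-\zeta(Q_{\mathcal D}\bar u)\|_{L^2}\big)^{1/2}\Big), \end{aligned} \] where $C$ depends only on the data in (A), an upper bound of $C_{\mathcal D}$, and on $\|\beta(Q_{\mathcal D}\bar u)\|_{L^2}$ and $\|Q_{\mathcal D}f\|_{L^2}$.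
   Context: Standing assumptions (A): $\Omega$ is an open bounded connected subset of $\mathbb{R}^d$; $\zeta:\mathbb{R}\to\mathbb{R}$ is continuous, non-decreasing, $\zeta(0)=0$ and there are $M_0,M_1>0$ with $|\zeta(s)|\ge M_0|s|-M_1$ for all $s$; $\beta:\mathbb{R}\to\mathbb{R}$ is continuous, non-decreasing, $\beta(0)=0$ and there are $K_0,K_1>0$ with $|\beta(s)|\le K_0|s|+K_1$ for all $s$; $\beta+\zeta$ is strictly increasing; $\Lambda:\Omega\to M_d(\mathbb{R})$ is measurable and there are $\overline\lambda\ge\underline\lambda>0$ such that for a.e. $x$, $\Lambda(x)$ is symmetric with eigenvalues in $[\underline\lambda,\overline\lambda]$; $f\in L^2(\Omega)$, $F\in L^2(\Omega)^d$. Weak problem (W): find $\bar u\in L^2(\Omega)$ with $\zeta(\bar u)\in H^1_0(\Omega)$ and $\int_\Omega\beta(\bar u)\bar v+\int_\Omega\Lambda\nabla\zeta(\bar u)\cdot\nabla\bar v=\int_\Omega f\bar v-\int_\Omega F\cdot\nabla\bar v$ for all $\bar v\in H^1_0(\Omega)$ (unique solution under (A)). Gradient Discretisation (GD): $\mathcal D=(X_{\mathcal D,0},\Pi_{\mathcal D},\nabla_{\mathcal D},Q_{\mathcal D})$ where $X_{\mathcal D,0}$ is a finite-dimensional space, $\Pi_{\mathcal D}:X_{\mathcal D,0}\to L^2(\Omega)$ and $\nabla_{\mathcal D}:X_{\mathcal D,0}\to L^2(\Omega)^d$ are linear with $\|v\|_{\mathcal D}:=\|\nabla_{\mathcal D}v\|_{L^2}$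 a norm on $X_{\mathcal D,0}$, and $Q_{\mathcal D}:L^2(\Omega)\to L^2(\Omega)$ is a (not necessarily linear or bounded) map called the quadrature operator. Piecewise constant reconstruction: there are finite sets $I_{\partial\Omega}\subset I$ with $X_{\mathcal D,0}=\{v=(v_i)_{i\in I}: v_i\in\mathbb{R},\ v_i=0\ \forall i\in I_{\partial\Omega}\}$ and a partition $(U_i)_{i\in I}$ of $\Omega$ with $\Pi_{\mathcal D}v=\sum_{i\in I}v_i\mathbf 1_{U_i}$; for $g$ with $g(0)=0$, $g(v):=(g(v_i))_{i\in I}$. Mass-lumped version: $\mathcal D=(X_{\mathcal D,0},\Pi_{\mathcal D},\nabla_{\mathcal D},Q_{\mathcal D})$ of $\mathcal D_*=(X_{\mathcal D,0},\Pi_{\mathcal D_*},\nabla_{\mathcal D},Q_{\mathcal D})$ means only the function reconstructions differ and $\Pi_{\mathcal D}$ is piecewise constant. Gradient Scheme (GS): find $u\in X_{\mathcal D,0}$ such that for all $v\in X_{\mathcal D,0}$, $\int_\Omega\beta(\Pi_{\mathcal D}u)\Pi_{\mathcal D}v+\int_\Omega\Lambda\nabla_{\mathcal D}\zeta(u)\cdot\nabla_{\mathcal D}v=\int_\Omega Q_{\mathcal D}f\,\Pi_{\mathcal D}v-\int_\Omega F\cdot\nabla_{\mathcal D}v$. Quantities: $C_{\mathcal D}:=\max_{v\ne0}\|\Pi_{\mathcal D}v\|_{L^2}/\|\nabla_{\mathcal D}v\|_{L^2}$; $S_{\mathcal D}(\varphi):=\min_{v\in X_{\mathcal D,0}}(\|\nabla_{\mathcal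 D}v-\nabla\varphi\|_{L^2}+\|\Pi_{\mathcal D}v-\varphi\|_{L^2})$ for $\varphi\in H^1_0(\Omega)$; $W_{\mathcal D_*}(\psi):=\max_{v\ne0}\frac{1}{\|\nabla_{\mathcal D}v\|_{L^2}}\left|\int_\Omega\nabla_{\mathcal D}v\cdot\psi+\Pi_{\mathcal D_*}v\,\mathrm{div}\psi\right|$ for $\psi\in H_{\mathrm{div}}(\Omega)$. *)

theory Defs
  imports "HOL-Analysis.Analysis"
begin

abbreviation intO :: "(real^'n) set \<Rightarrow> (real^'n \<Rightarrow> real) \<Rightarrow> real" where
  "intO \<Omega> h \<equiv> (\<integral>x. h x \<partial>(lebesgue_on \<Omega>))"

definition L2 :: "(real^'n) set \<Rightarrow> (real^'n \<Rightarrow> real) \<Rightarrow> bool" where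
  "L2 \<Omega> h \<longleftrightarrow> h \<in> borel_measurable (lebesgue_on \<Omega>) \<and>
     integrable (lebesgue_on \<Omega>) (\<lambda>x. (h x)\<^sup>2)"

definition L2v :: "(real^'n) set \<Rightarrow> (real^'n \<Rightarrow> real^'n) \<Rightarrow> bool" where
  "L2v \<Omega> G \<longleftrightarrow> G \<in> borel_measurable (lebesgue_on \<Omega>) \<and>
     integrable (lebesgue_on \<Omega>) (\<lambda>x. (norm (G x))\<^sup>2)"

definition L2norm :: "(real^'n) set \<Rightarrow> (real^'n \<Rightarrow> real) \<Rightarrow> real" where
  "L2norm \<Omega> h = sqrt (intO \<Omega> (\<lambda>x. (h x)\<^sup>2))"

definition L2normv :: "(real^'n) set \<Rightarrow> (real^'n \<Rightarrow> real^'n) \<Rightarrow> real" where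
  "L2normv \<Omega> G = sqrt (intO \<Omega> (\<lambda>x. (norm (G x))\<^sup>2))"

fun Ck :: "nat \<Rightarrow> ('a::euclidean_space \<Rightarrow> real) \<Rightarrow> bool" where
  "Ck 0 f \<longleftrightarrow> continuous_on UNIV f"
| "Ck (Suc k) f \<longleftrightarrow> continuous_on UNIV f \<and> (\<forall>x. f differentiable (at x)) \<and>
     (\<forall>v. Ck k (\<lambda>x. frechet_derivative f (at x) v))"

definition smooth_fun :: "('a::euclidean_space \<Rightarrow> real) \<Rightarrow> bool" where
  "smooth_fun f \<longleftrightarrow> (\<forall>k. Ck k f)"

definition test_fun :: "(real^'n) set \<Rightarrow> (real^'n \<Rightarrow> real) \<Rightarrow> bool" where
  "test_fun \<Omega> \<phi> \<longleftrightarrow> smooth_fun \<phi> \<and> compact (closure {x. \<phi> x \<noteq> 0}) \<and>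
     closure {x. \<phi> x \<noteq> 0} \<subseteq> \<Omega>"

definition grad :: "(real^'n \<Rightarrow> real) \<Rightarrow> real^'n \<Rightarrow> real^'n" where
  "grad \<phi> x = (\<chi> i. frechet_derivative \<phi> (at x) (axis i 1))"

text \<open>\<open>H10 \<Omega> \<phi> G\<close>: \<phi> \<in> H^1_0(\<Omega>) (closure of C_c^\<infinity>(\<Omega>) in the H^1 norm) and G is its
  (weak) gradient.\<close>
definition H10 :: "(real^'n) set \<Rightarrow> (real^'n \<Rightarrow> real) \<Rightarrow> (real^'n \<Rightarrow> real^'n) \<Rightarrow> bool" where
  "H10 \<Omega> \<phi> G \<longleftrightarrow> L2 \<Omega> \<phi> \<and> L2v \<Omega> G \<and>
     (\<exists>s. (\<forall>k. test_fun \<Omega> (s k)) \<and>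
          (\<lambda>k. L2norm \<Omega> (\<lambda>x. s k x - \<phi> x)) \<longlonglongrightarrow> 0 \<and>
          (\<lambda>k. L2normv \<Omega> (\<lambda>x. grad (s k) x - G x)) \<longlonglongrightarrow> 0)"

definition weak_div :: "(real^'n) set \<Rightarrow> (real^'n \<Rightarrow> real^'n) \<Rightarrow> (real^'n \<Rightarrow> real) \<Rightarrow> bool" where
  "weak_div \<Omega> \<psi> g \<longleftrightarrow> L2v \<Omega> \<psi> \<and> L2 \<Omega> g \<and>
     (\<forall>\<phi>. test_fun \<Omega> \<phi> \<longrightarrow> intO \<Omega> (\<lambda>x. \<psi> x \<bullet> grad \<phi> x) = - intO \<Omega> (\<lambda>x. g x * \<phi> x))"

definition eigs_in :: "real^'n^'n \<Rightarrow> real \<Rightarrow> real \<Rightarrow> bool" where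
  "eigs_in A a b \<longleftrightarrow> (\<forall>c v. v \<noteq> 0 \<and> A *v v = c *\<^sub>R v \<longrightarrow> a \<le> c \<and> c \<le> b)"

definition assumptions_A ::
  "(real^'n) set \<Rightarrow> (real \<Rightarrow> real) \<Rightarrow> (real \<Rightarrow> real) \<Rightarrow> (real^'n \<Rightarrow> real^'n^'n) \<Rightarrow>
   real \<Rightarrow> real \<Rightarrow> (real^'n \<Rightarrow> real) \<Rightarrow> (real^'n \<Rightarrow> real^'n) \<Rightarrow> bool" where
  "assumptions_A \<Omega> \<zeta> \<beta> \<Lambda> lam_lo lam_hi f F \<longleftrightarrow>
     open \<Omega> \<and> bounded \<Omega> \<and> connected \<Omega> \<and>
     continuous_on UNIV \<zeta> \<and> mono \<zeta> \<and> \<zeta> 0 = 0 \<and>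
     (\<exists>M0 M1. M0 > 0 \<and> M1 > 0 \<and> (\<forall>s. \<bar>\<zeta> s\<bar> \<ge> M0 * \<bar>s\<bar> - M1)) \<and>
     continuous_on UNIV \<beta> \<and> mono \<beta> \<and> \<beta> 0 = 0 \<and>
     (\<exists>K0 K1. K0 > 0 \<and> K1 > 0 \<and> (\<forall>s. \<bar>\<beta> s\<bar> \<le> K0 * \<bar>s\<bar> + K1)) \<and>
     strict_mono (\<lambda>s. \<beta> s + \<zeta> s) \<and>
     \<Lambda> \<in> borel_measurable (lebesgue_on \<Omega>) \<and> 0 < lam_lo \<and> lam_lo \<le> lam_hi \<and>
     (AE x in lebesgue_on \<Omega>. transpose (\<Lambda> x) = \<Lambda> x \<and> eigs_in (\<Lambda> x) lam_lo lam_hi) \<and>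
     L2 \<Omega> f \<and> L2v \<Omega> F"

text \<open>\<open>weak_sol \<dots> ub Gz\<close>: ub solves (W), and Gz is the gradient of \<zeta>(ub) \<in> H^1_0.\<close>
definition weak_sol ::
  "(real^'n) set \<Rightarrow> (real \<Rightarrow> real) \<Rightarrow> (real \<Rightarrow> real) \<Rightarrow> (real^'n \<Rightarrow> real^'n^'n) \<Rightarrow>
   (real^'n \<Rightarrow> real) \<Rightarrow> (real^'n \<Rightarrow> real^'n) \<Rightarrow> (real^'n \<Rightarrow> real) \<Rightarrow> (real^'n \<Rightarrow> real^'n) \<Rightarrow> bool" where
  "weak_sol \<Omega> \<zeta> \<beta> \<Lambda> f F ub Gz \<longleftrightarrow> L2 \<Omega> ub \<and> H10 \<Omega> (\<lambda>x. \<zeta> (ub x)) Gz \<and>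
     (\<forall>v Gv. H10 \<Omega> v Gv \<longrightarrow>
        intO \<Omega> (\<lambda>x. \<beta> (ub x) * v x) + intO \<Omega> (\<lambda>x. (\<Lambda> x *v Gz x) \<bullet> Gv x)
        = intO \<Omega> (\<lambda>x. f x * v x) - intO \<Omega> (\<lambda>x. F x \<bullet> Gv x))"

text \<open>Degrees of freedom indexed by a finite set I \<subseteq> nat; boundary indices Ib \<subseteq> I.
  X_{D,0} = {v \<in> R^I : v_i = 0 for i \<in> Ib} (represented as functions vanishing outside I).\<close>
definition XD0 :: "nat set \<Rightarrow> nat set \<Rightarrow> (nat \<Rightarrow> real) set" where
  "XD0 I Ib = {v. (\<forall>i. i \<notin> I \<longrightarrow> v i = 0) \<and> (\<forall>i\<in>Ib. v i = 0)}"

definition PiPC :: "nat set \<Rightarrow> (nat \<Rightarrow> (real^'n) set) \<Rightarrow> (nat \<Rightarrow> real) \<Rightarrow> real^'n \<Rightarrow> real" where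
  "PiPC I U v = (\<lambda>x. \<Sum>i\<in>I. v i * indicator (U i) x)"

definition lin_on_X_scalar :: "(real^'n) set \<Rightarrow> (nat \<Rightarrow> real) set \<Rightarrow> ((nat \<Rightarrow> real) \<Rightarrow> real^'n \<Rightarrow> real) \<Rightarrow> bool" where
  "lin_on_X_scalar \<Omega> X P \<longleftrightarrow> (\<forall>v\<in>X. \<forall>w\<in>X. \<forall>a b.
     AE x in lebesgue_on \<Omega>. P (\<lambda>i. a * v i + b * w i) x = a * P v x + b * P w x)"

definition lin_on_X_vec :: "(real^'n) set \<Rightarrow> (nat \<Rightarrow> real) set \<Rightarrow> ((nat \<Rightarrow> real) \<Rightarrow> real^'n \<Rightarrow> real^'n) \<Rightarrow> bool" where
  "lin_on_X_vec \<Omega> X P \<longleftrightarrow> (\<forall>v\<in>X. \<forall>w\<in>X. \<forall>a b.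
     AE x in lebesgue_on \<Omega>. P (\<lambda>i. a * v i + b * w i) x = a *\<^sub>R P v x + b *\<^sub>R P w x)"

text \<open>\<open>mass_lumped_GD \<Omega> I Ib U PiS gD Q\<close>: D = (X_{D,0}, \<Pi>_D, \<nabla>_D, Q_D) with \<Pi>_D the
  piecewise constant reconstruction on the partition (U_i)_{i\<in>I} of \<Omega>, is the mass-lumped
  version of the gradient discretisation D_* = (X_{D,0}, PiS, \<nabla>_D, Q_D).\<close>
definition mass_lumped_GD ::
  "(real^'n) set \<Rightarrow> nat set \<Rightarrow> nat set \<Rightarrow> (nat \<Rightarrow> (real^'n) set) \<Rightarrow>
   ((nat \<Rightarrow> real) \<Rightarrow> real^'n \<Rightarrow> real) \<Rightarrow> ((nat \<Rightarrow> real) \<Rightarrow> real^'n \<Rightarrow> real^'n) \<Rightarrow>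
   ((real^'n \<Rightarrow> real) \<Rightarrow> (real^'n \<Rightarrow> real)) \<Rightarrow> bool" where
  "mass_lumped_GD \<Omega> I Ib U PiS gD Q \<longleftrightarrow>
     finite I \<and> Ib \<subseteq> I \<and>
     (\<forall>i\<in>I. U i \<in> sets lebesgue) \<and> (\<forall>i\<in>I. \<forall>j\<in>I. i \<noteq> j \<longrightarrow> U i \<inter> U j = {}) \<and>
     (\<Union>i\<in>I. U i) = \<Omega> \<and>
     lin_on_X_vec \<Omega> (XD0 I Ib) gD \<and> (\<forall>v\<in>XD0 I Ib. L2v \<Omega> (gD v)) \<and>
     (\<forall>v\<in>XD0 I Ib. L2normv \<Omega> (gD v) = 0 \<longrightarrow> v = (\<lambda>i. 0)) \<and>
     lin_on_X_scalar \<Omega> (XD0 I Ib) PiS \<and> (\<forall>v\<in>XD0 I Ib. L2 \<Omega> (PiS v)) \<and>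
     (\<forall>h. L2 \<Omega> h \<longrightarrow> L2 \<Omega> (Q h))"

definition GS_sol ::
  "(real^'n) set \<Rightarrow> (real \<Rightarrow> real) \<Rightarrow> (real \<Rightarrow> real) \<Rightarrow> (real^'n \<Rightarrow> real^'n^'n) \<Rightarrow>
   (real^'n \<Rightarrow> real) \<Rightarrow> (real^'n \<Rightarrow> real^'n) \<Rightarrow>
   (nat \<Rightarrow> real) set \<Rightarrow> ((nat \<Rightarrow> real) \<Rightarrow> real^'n \<Rightarrow> real) \<Rightarrow> ((nat \<Rightarrow> real) \<Rightarrow> real^'n \<Rightarrow> real^'n) \<Rightarrow>
   ((real^'n \<Rightarrow> real) \<Rightarrow> (real^'n \<Rightarrow> real)) \<Rightarrow> (nat \<Rightarrow> real) \<Rightarrow> bool" where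
  "GS_sol \<Omega> \<zeta> \<beta> \<Lambda> f F X PiD gD Q u \<longleftrightarrow> u \<in> X \<and>
     (\<forall>v\<in>X. intO \<Omega> (\<lambda>x. \<beta> (PiD u x) * PiD v x)
              + intO \<Omega> (\<lambda>x. (\<Lambda> x *v gD (\<lambda>i. \<zeta> (u i)) x) \<bullet> gD v x)
            = intO \<Omega> (\<lambda>x. Q f x * PiD v x) - intO \<Omega> (\<lambda>x. F x \<bullet> gD v x))"

text \<open>Maxima over v \<noteq> 0 of non-negative quotients, written as suprema (0 is added so that
  the value is 0 when X_{D,0} = {0}).\<close>
definition CD :: "(real^'n) set \<Rightarrow> (nat \<Rightarrow> real) set \<Rightarrow> ((nat \<Rightarrow> real) \<Rightarrow> real^'n \<Rightarrow> real) \<Rightarrow>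
   ((nat \<Rightarrow> real) \<Rightarrow> real^'n \<Rightarrow> real^'n) \<Rightarrow> real" where
  "CD \<Omega> X PiD gD = Sup (insert 0 {L2norm \<Omega> (PiD v) / L2normv \<Omega> (gD v) | v. v \<in> X \<and> v \<noteq> (\<lambda>i. 0)})"

definition SD :: "(real^'n) set \<Rightarrow> (nat \<Rightarrow> real) set \<Rightarrow> ((nat \<Rightarrow> real) \<Rightarrow> real^'n \<Rightarrow> real) \<Rightarrow>
   ((nat \<Rightarrow> real) \<Rightarrow> real^'n \<Rightarrow> real^'n) \<Rightarrow> (real^'n \<Rightarrow> real) \<Rightarrow> (real^'n \<Rightarrow> real^'n) \<Rightarrow> real" where
  "SD \<Omega> X PiD gD \<phi> G\<phi> = Inf {L2normv \<Omega> (\<lambda>x. gD v x - G\<phi> x) + L2norm \<Omega> (\<lambda>x. PiD v x - \<phi> x) | v. v \<in> X}"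

definition WD :: "(real^'n) set \<Rightarrow> (nat \<Rightarrow> real) set \<Rightarrow> ((nat \<Rightarrow> real) \<Rightarrow> real^'n \<Rightarrow> real) \<Rightarrow>
   ((nat \<Rightarrow> real) \<Rightarrow> real^'n \<Rightarrow> real^'n) \<Rightarrow> (real^'n \<Rightarrow> real^'n) \<Rightarrow> (real^'n \<Rightarrow> real) \<Rightarrow> real" where
  "WD \<Omega> X PiS gD \<psi> div\<psi> = Sup (insert 0
     {\<bar>intO \<Omega> (\<lambda>x. gD v x \<bullet> \<psi> x + PiS v x * div\<psi> x)\<bar> / L2normv \<Omega> (gD v) | v. v \<in> X \<and> v \<noteq> (\<lambda>i. 0)})"

definition alphaD :: "(real^'n) set \<Rightarrow> (nat \<Rightarrow> real) set \<Rightarrow> ((nat \<Rightarrow> real) \<Rightarrow> real^'n \<Rightarrow> real) \<Rightarrow>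
   ((nat \<Rightarrow> real) \<Rightarrow> real^'n \<Rightarrow> real) \<Rightarrow> ((nat \<Rightarrow> real) \<Rightarrow> real^'n \<Rightarrow> real^'n) \<Rightarrow> real" where
  "alphaD \<Omega> X PiD PiS gD = Sup (insert 0
     {L2norm \<Omega> (\<lambda>x. PiD v x - PiS v x) / L2normv \<Omega> (gD v) | v. v \<in> X \<and> v \<noteq> (\<lambda>i. 0)})"

end

theory Submission
  imports Defs "HOL-Computational_Algebra.Polynomial"
begin

text \<open>Let ub solve the weak problem, u the scheme, and \<open>e = I\<^sub>D \<zeta>(ub) - \<zeta>(u)\<close>.
  Coercivity of \<Lambda> bounds \<open>\<lambda> \<parallel>\<nabla>\<^sub>D e\<parallel>\<^sup>2\<close> by \<open>\<integral> \<Lambda>\<nabla>\<^sub>D e \<cdot> \<nabla>\<^sub>D e\<close>. Splitting \<open>\<nabla>\<^sub>D e\<close> through \<open>\<nabla>\<zeta>(ub)\<close> and using that the flux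
  \<open>\<psi> = \<Lambda>\<nabla>\<zeta>(ub) + F\<close> has divergence \<open>\<beta>(ub) - f\<close> (fundamental lemma of the calculus of
  variations), this integral becomes the \<open>W\<^sub>D\<^sub>*\<close> defect of \<psi> tested with e plus the scheme
  tested with e. Every remaining term is a consistency defect controlled by \<open>S\<^sub>D\<close>,
  \<open>\<alpha>\<^sub>D\<^sub>,\<^sub>D\<^sub>*\<close> or \<open>\<parallel>Q\<^sub>D f - f\<parallel>\<close>, except the reaction term
  \<open>\<integral> (\<beta>(\<Pi>\<^sub>D u) - \<beta>(ub)) \<Pi>\<^sub>D e\<close>: inserting \<open>\<zeta>(ub)\<close> there, monotonicity makes one part
  non-positive and the other is bounded by \<open>S\<^sub>D\<close> times a bound on \<open>\<parallel>\<beta>(\<Pi>\<^sub>D u)\<parallel>\<close> coming from the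
  a priori estimate. The resulting inequality \<open>\<lambda>E\<^sup>2 \<le> aE + b S\<^sub>D\<close> gives the estimate.
  The suprema defining \<open>C\<^sub>D\<close>, \<open>W\<^sub>D\<^sub>*\<close> and \<open>\<alpha>\<^sub>D\<^sub>,\<^sub>D\<^sub>*\<close> are finite and bound the
  corresponding quotients because all norms on the finite-dimensional space \<open>X\<^sub>D\<^sub>,\<^sub>0\<close> are
  equivalent.\<close>

section \<open>Symmetric matrices with spectrum in an interval\<close>

lemma inner_mat_symmetric:
  fixes A :: "real^'n^'n"
  assumes "transpose A = A"
  shows "x \<bullet> (A *v y) = y \<bullet> (A *v x)"
proof -
  have "x \<bullet> (A *v y) = (x v* A) \<bullet> y" by (simp add: dot_lmul_matrix)
  also have "x v* A = A *v x" using assms transpose_matrix_vector[of A x] by simp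
  finally show ?thesis by (simp add: inner_commute)
qed

lemma linear_coeff_zero_if_quadratic_nonneg:
  fixes c d :: real
  assumes "\<And>t. 0 \<le> 2*t*c + t^2*d"
  shows "c = 0"
proof (rule ccontr)
  assume c: "c \<noteq> 0"
  define s where "s = 1 / (\<bar>d\<bar> + 1)"
  have s: "s > 0" "s * \<bar>d\<bar> < 1" unfolding s_def by (auto simp: field_simps)
  have "0 \<le> 2*(- (c * s))*c + (- (c * s))^2*d" by (rule assms)
  also have "\<dots> = c^2 * s * (s*d - 2)" by (simp add: power2_eq_square algebra_simps)
  also have "\<dots> < 0"
  proof -
    have "s*d - 2 < 0" using s abs_ge_self[of d] by (smt (verit) mult_left_mono)
    moreover have "c^2 * s > 0" using c s by simp
    ultimately show ?thesis by (simp add: mult_pos_neg)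
  qed
  finally show False by simp
qed

lemma quadratic_form_attains_min_on_sphere:
  fixes A :: "real^'n^'n"
  obtains v0 where "norm v0 = 1" "\<And>u. (v0 \<bullet> (A *v v0)) * (norm u)^2 \<le> u \<bullet> (A *v u)"
proof -
  let ?q = "\<lambda>u. u \<bullet> (A *v u)"
  have cont: "continuous_on (sphere 0 1) ?q"
    by (intro continuous_intros matrix_vector_mult_linear_continuous_on[THEN continuous_on_compose2])
       (auto intro: continuous_on_id)
  have "axis undefined 1 \<in> sphere (0::real^'n) 1" by simp
  then have ne: "sphere (0::real^'n) 1 \<noteq> {}" by blast
  obtain v0 where v0: "v0 \<in> sphere 0 1" and mn: "\<And>y. y \<in> sphere 0 1 \<Longrightarrow> ?q v0 \<le> ?q y"
    using continuous_attains_inf[OF compact_sphere ne cont] by blast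
  have "?q v0 * (norm u)^2 \<le> ?q u" for u
  proof (cases "u = 0")
    case False
    let ?u = "(1/norm u) *\<^sub>R u"
    have "?q v0 \<le> ?q ?u" using False by (intro mn) simp
    also have "?q ?u = ?q u / (norm u)^2"
      by (simp add: matrix_vector_mult_scaleR power2_eq_square field_simps)
    finally show ?thesis using False by (simp add: field_simps)
  qed simp
  with v0 show ?thesis using that by simp
qed

text \<open>At a minimiser v0 of the Rayleigh quotient, expanding the quotient along v0 + t w
  with w = A v0 - m v0 shows that the linear term in t, which equals \<open>\<parallel>w\<parallel>\<^sup>2\<close>, must vanish.\<close>
lemma rayleigh_minimiser_is_eigenvector:
  fixes A :: "real^'n^'n"
  assumes sym: "transpose A = A" and nv0: "norm v0 = 1"
    and low: "\<And>u. m * (norm u)^2 \<le> u \<bullet> (A *v u)"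
    and m: "m = v0 \<bullet> (A *v v0)"
  shows "A *v v0 = m *\<^sub>R v0"
proof -
  let ?q = "\<lambda>u. u \<bullet> (A *v u)"
  define w where "w = A *v v0 - m *\<^sub>R v0"
  have "0 \<le> 2*t*(w \<bullet> (A *v v0) - m * (w \<bullet> v0)) + t^2*(?q w - m * (norm w)^2)" for t
  proof -
    have "m * (norm (v0 + t *\<^sub>R w))^2 \<le> ?q (v0 + t *\<^sub>R w)" by (rule low)
    moreover have "?q (v0 + t *\<^sub>R w) = m + 2*t*(w \<bullet> (A *v v0)) + t^2 * ?q w"
      using inner_mat_symmetric[OF sym, of v0 w]
      by (simp add: m matrix_vector_right_distrib matrix_vector_mult_scaleR inner_add_left
          inner_add_right power2_eq_square algebra_simps)
    moreover have "(norm (v0 + t *\<^sub>R w))^2 = 1 + 2*t*(w \<bullet> v0) + t^2 * (norm w)^2"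
    proof -
      have "(norm (v0 + t *\<^sub>R w))^2 = (v0 + t *\<^sub>R w) \<bullet> (v0 + t *\<^sub>R w)"
        by (simp add: dot_square_norm)
      also have "\<dots> = v0 \<bullet> v0 + 2*t*(w \<bullet> v0) + t^2 * (w \<bullet> w)"
        by (simp add: inner_add_left inner_add_right inner_commute power2_eq_square algebra_simps)
      finally show ?thesis using nv0 by (simp add: dot_square_norm)
    qed
    ultimately show ?thesis by (simp add: algebra_simps)
  qed
  then have "w \<bullet> (A *v v0) - m * (w \<bullet> v0) = 0" by (rule linear_coeff_zero_if_quadratic_nonneg)
  then have "w \<bullet> w = 0" unfolding w_def by (simp add: inner_diff_right algebra_simps)
  then show ?thesis unfolding w_def by simp
qed

lemma quadratic_form_ge_min_eigenvalue:
  fixes A :: "real^'n^'n"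
  assumes sym: "transpose A = A"
    and ev: "\<And>c v. v \<noteq> 0 \<Longrightarrow> A *v v = c *\<^sub>R v \<Longrightarrow> a \<le> c"
  shows "a * (norm v)^2 \<le> v \<bullet> (A *v v)"
proof -
  obtain v0 where nv0: "norm v0 = 1" and low: "\<And>u. (v0 \<bullet> (A *v v0)) * (norm u)^2 \<le> u \<bullet> (A *v u)"
    using quadratic_form_attains_min_on_sphere[of A] by blast
  have "A *v v0 = (v0 \<bullet> (A *v v0)) *\<^sub>R v0"
    by (rule rayleigh_minimiser_is_eigenvector[OF sym nv0 low refl])
  moreover have "v0 \<noteq> 0" using nv0 by auto
  ultimately have "a \<le> v0 \<bullet> (A *v v0)" by (rule ev[rotated])
  then have "a * (norm v)^2 \<le> (v0 \<bullet> (A *v v0)) * (norm v)^2" by (simp add: mult_right_mono)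
  also have "\<dots> \<le> v \<bullet> (A *v v)" by (rule low)
  finally show ?thesis .
qed

lemma psd_cauchy_schwarz:
  fixes A :: "real^'n^'n"
  assumes sym: "transpose A = A" and psd: "\<And>u. 0 \<le> u \<bullet> (A *v u)"
  shows "(x \<bullet> (A *v y))^2 \<le> (x \<bullet> (A *v x)) * (y \<bullet> (A *v y))"
proof -
  let ?p = "x \<bullet> (A *v x)" and ?r = "x \<bullet> (A *v y)" and ?s = "y \<bullet> (A *v y)"
  have key: "0 \<le> ?p + 2*t*?r + t^2*?s" for t
  proof -
    have "0 \<le> (x + t *\<^sub>R y) \<bullet> (A *v (x + t *\<^sub>R y))" by (rule psd)
    also have "\<dots> = ?p + 2*t*?r + t^2*?s"
      using inner_mat_symmetric[OF sym, of x y]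
      by (simp add: matrix_vector_right_distrib matrix_vector_mult_scaleR inner_add_left
            inner_add_right power2_eq_square algebra_simps)
    finally show ?thesis .
  qed
  show ?thesis
  proof (cases "?s = 0")
    case True
    have "?r = 0"
    proof (rule ccontr)
      assume r: "?r \<noteq> 0"
      have "0 \<le> ?p + 2*(- (?p + 1) / (2 * ?r))*?r + (- (?p + 1) / (2 * ?r))^2*?s" by (rule key)
      also have "\<dots> = -1" using r True by (simp add: field_simps)
      finally show False by simp
    qed
    then show ?thesis using True by simp
  next
    case False
    then have s: "?s > 0" using psd[of y] by simp
    have "0 \<le> ?p + 2*(- ?r / ?s)*?r + (- ?r / ?s)^2*?s" by (rule key)
    also have "\<dots> = ?p - ?r^2 / ?s" using s by (simp add: field_simps power2_eq_square)
    finally show ?thesis using s by (simp add: field_simps)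
  qed
qed

lemma transpose_diff: "transpose (A - B) = transpose A - transpose (B :: real^'n^'n)"
  by (simp add: transpose_def vec_eq_iff)

lemma eigs_in_bounds:
  fixes A :: "real^'n^'n"
  assumes sym: "transpose A = A" and ev: "eigs_in A a b" and a: "0 < a"
  shows "a * (norm v)^2 \<le> v \<bullet> (A *v v)" and "norm (A *v v) \<le> b * norm v"
proof -
  show lo: "a * (norm v)^2 \<le> v \<bullet> (A *v v)" for v
    by (rule quadratic_form_ge_min_eigenvalue[OF sym]) (use ev in \<open>auto simp: eigs_in_def\<close>)
  have psd: "0 \<le> u \<bullet> (A *v u)" for u
    using lo[of u] a by (smt (verit) mult_nonneg_nonneg zero_le_power2)
  define B where "B = b *\<^sub>R mat 1 - A"
  have Bv: "B *v u = b *\<^sub>R u - A *v u" for u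
    by (simp add: B_def matrix_vector_mult_diff_rdistrib scaleR_matrix_vector_assoc[symmetric])
  have symB: "transpose B = B" using sym by (simp add: B_def transpose_diff transpose_scalar)
  have "0 * (norm u)^2 \<le> u \<bullet> (B *v u)" for u
  proof (rule quadratic_form_ge_min_eigenvalue[OF symB])
    fix c w assume "w \<noteq> 0" "B *v w = c *\<^sub>R w"
    then have "A *v w = (b - c) *\<^sub>R w" by (simp add: Bv algebra_simps)
    with \<open>w \<noteq> 0\<close> ev show "0 \<le> c" by (auto simp: eigs_in_def)
  qed
  then have up: "u \<bullet> (A *v u) \<le> b * (norm u)^2" for u
    by (simp add: Bv inner_diff_right dot_square_norm)
  have b0: "0 \<le> b" using up[of "axis undefined 1"] psd[of "axis undefined 1"] by simp
  let ?w = "A *v v"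
  have "(?w \<bullet> (A *v v))^2 \<le> (?w \<bullet> (A *v ?w)) * (v \<bullet> (A *v v))"
    by (rule psd_cauchy_schwarz[OF sym psd])
  also have "\<dots> \<le> (b * (norm ?w)^2) * (b * (norm v)^2)"
    by (intro mult_mono up psd) (use psd[of ?w] up[of ?w] in auto)
  finally have "((norm ?w)^2)^2 \<le> (b * norm v)^2 * (norm ?w)^2"
    by (simp add: dot_square_norm power2_eq_square algebra_simps)
  then have "(norm ?w)^2 \<le> (b * norm v)^2"
    by (cases "norm ?w = 0") (auto simp: power2_eq_square)
  then show "norm (A *v v) \<le> b * norm v"
    using b0 by (meson norm_ge_zero power2_le_imp_le mult_nonneg_nonneg)
qed

section \<open>Square integrable functions on \<Omega>\<close>

lemma le_0_if_le_all_pos_mult: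
  fixes X c :: real
  assumes c: "0 \<le> c" and H: "\<And>t. t > 0 \<Longrightarrow> X \<le> t * c"
  shows "X \<le> 0"
proof (rule ccontr)
  assume X: "\<not> X \<le> 0"
  then have "X \<le> X / (c + 1) * c" using c by (intro H) simp
  then show False using X c by (simp add: field_simps)
qed

lemma le_sqrt_mult_if_amgm_bound:
  fixes X a b :: real
  assumes a: "0 \<le> a" and b: "0 \<le> b" and H: "\<And>t. t > 0 \<Longrightarrow> X \<le> (t*a + b/t)/2"
  shows "X \<le> sqrt a * sqrt b"
proof (cases "a > 0 \<and> b > 0")
  case True
  define t where "t = sqrt b / sqrt a"
  have t: "t > 0" using True by (simp add: t_def)
  have "X \<le> (t*a + b/t)/2" by (rule H[OF t])
  also have "t*a = sqrt a * sqrt b"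
    using True by (simp add: t_def field_simps)
  also have "b/t = sqrt a * sqrt b"
    using True by (simp add: t_def field_simps)
  finally show ?thesis by simp
next
  case False
  then consider "a = 0" | "b = 0" using a b by linarith
  then have "X \<le> 0"
  proof cases
    case 1
    show ?thesis
    proof (rule le_0_if_le_all_pos_mult[of "b/2"])
      show "X \<le> s * (b/2)" if "s > 0" for s using H[of "1/s"] 1 that by (simp add: mult.commute)
    qed (use b in simp)
  next
    case 2
    show ?thesis by (rule le_0_if_le_all_pos_mult[of "a/2"]) (use a H 2 in auto)
  qed
  moreover have "0 \<le> sqrt a * sqrt b" using a b by simp
  ultimately show ?thesis by linarith
qed

lemma cauchy_schwarz_integral:
  fixes p q :: "'a \<Rightarrow> real"
  assumes [measurable]: "p \<in> borel_measurable M" "q \<in> borel_measurable M"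
    and ip: "integrable M (\<lambda>x. (p x)^2)" and iq: "integrable M (\<lambda>x. (q x)^2)"
  shows "integrable M (\<lambda>x. p x * q x)"
    and "(\<integral>x. \<bar>p x * q x\<bar> \<partial>M) \<le> sqrt (\<integral>x. (p x)^2 \<partial>M) * sqrt (\<integral>x. (q x)^2 \<partial>M)"
proof -
  have pw: "\<bar>p x * q x\<bar> \<le> (t * (p x)^2 + (q x)^2 / t)/2" if "t > 0" for t x
  proof -
    have "0 \<le> (t * \<bar>p x\<bar> - \<bar>q x\<bar>)^2 / t" using that by simp
    also have "(t * \<bar>p x\<bar> - \<bar>q x\<bar>)^2 / t = t * (p x)^2 - 2 * \<bar>p x * q x\<bar> + (q x)^2 / t"
      using that by (simp add: power2_eq_square field_simps abs_mult)
    finally show ?thesis by simp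
  qed
  have ipq: "integrable M (\<lambda>x. (1 * (p x)^2 + (q x)^2 / 1)/2)" using ip iq by simp
  show I: "integrable M (\<lambda>x. p x * q x)"
    by (rule Bochner_Integration.integrable_bound[OF ipq]) (use pw[of 1] in \<open>auto intro!: AE_I2 simp: abs_mult\<close>)
  have IA: "integrable M (\<lambda>x. \<bar>p x * q x\<bar>)" using I by simp
  show "(\<integral>x. \<bar>p x * q x\<bar> \<partial>M) \<le> sqrt (\<integral>x. (p x)^2 \<partial>M) * sqrt (\<integral>x. (q x)^2 \<partial>M)"
  proof (rule le_sqrt_mult_if_amgm_bound)
    show "0 \<le> (\<integral>x. (p x)^2 \<partial>M)" "0 \<le> (\<integral>x. (q x)^2 \<partial>M)" by auto
    fix t :: real assume t: "t > 0"
    have "(\<integral>x. \<bar>p x * q x\<bar> \<partial>M) \<le> (\<integral>x. (t * (p x)^2 + (q x)^2 / t)/2 \<partial>M)"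
      by (rule integral_mono[OF IA]) (use ip iq pw[OF t] in auto)
    also have "\<dots> = (t * (\<integral>x. (p x)^2 \<partial>M) + (\<integral>x. (q x)^2 \<partial>M) / t)/2"
      using ip iq by simp
    finally show "(\<integral>x. \<bar>p x * q x\<bar> \<partial>M) \<le> (t * (\<integral>x. (p x)^2 \<partial>M) + (\<integral>x. (q x)^2 \<partial>M) / t)/2" .
  qed
qed

lemma L2norm_nonneg: "0 \<le> L2norm \<Omega> f" by (simp add: L2norm_def)
lemma L2normv_nonneg: "0 \<le> L2normv \<Omega> f" by (simp add: L2normv_def)
lemma L2norm_sq: "(L2norm \<Omega> f)^2 = intO \<Omega> (\<lambda>x. (f x)^2)"
  by (simp add: L2norm_def)
lemma L2normv_sq: "(L2normv \<Omega> f)^2 = intO \<Omega> (\<lambda>x. (norm (f x))^2)"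
  by (simp add: L2normv_def)

lemma L2_prod:
  assumes "L2 \<Omega> f" "L2 \<Omega> g"
  shows "integrable (lebesgue_on \<Omega>) (\<lambda>x. f x * g x)"
    and "\<bar>intO \<Omega> (\<lambda>x. f x * g x)\<bar> \<le> L2norm \<Omega> f * L2norm \<Omega> g"
proof -
  note c = cauchy_schwarz_integral[of f "lebesgue_on \<Omega>" g]
  show I: "integrable (lebesgue_on \<Omega>) (\<lambda>x. f x * g x)" using assms c by (auto simp: L2_def)
  have "\<bar>intO \<Omega> (\<lambda>x. f x * g x)\<bar> \<le> intO \<Omega> (\<lambda>x. \<bar>f x * g x\<bar>)" by (rule integral_abs_bound)
  also have "\<dots> \<le> L2norm \<Omega> f * L2norm \<Omega> g" using assms c by (auto simp: L2_def L2norm_def)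
  finally show "\<bar>intO \<Omega> (\<lambda>x. f x * g x)\<bar> \<le> L2norm \<Omega> f * L2norm \<Omega> g" .
qed

lemma L2v_inner:
  fixes F G :: "real^'n \<Rightarrow> real^'n"
  assumes F: "L2v \<Omega> F" and G: "L2v \<Omega> G"
  shows "integrable (lebesgue_on \<Omega>) (\<lambda>x. F x \<bullet> G x)"
    and "\<bar>intO \<Omega> (\<lambda>x. F x \<bullet> G x)\<bar> \<le> L2normv \<Omega> F * L2normv \<Omega> G"
proof -
  have m: "(\<lambda>x. norm (F x)) \<in> borel_measurable (lebesgue_on \<Omega>)"
          "(\<lambda>x. norm (G x)) \<in> borel_measurable (lebesgue_on \<Omega>)"
    using F G by (auto simp: L2v_def)
  note c = cauchy_schwarz_integral[OF m]
  have mi: "(\<lambda>x. F x \<bullet> G x) \<in> borel_measurable (lebesgue_on \<Omega>)"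
    using F G by (auto simp: L2v_def intro: borel_measurable_inner)
  have In: "integrable (lebesgue_on \<Omega>) (\<lambda>x. norm (F x) * norm (G x))"
    using c F G by (auto simp: L2v_def)
  show I: "integrable (lebesgue_on \<Omega>) (\<lambda>x. F x \<bullet> G x)"
    by (rule Bochner_Integration.integrable_bound[OF In mi]) (auto intro!: AE_I2 simp: Cauchy_Schwarz_ineq2)
  have "\<bar>intO \<Omega> (\<lambda>x. F x \<bullet> G x)\<bar> \<le> intO \<Omega> (\<lambda>x. \<bar>norm (F x) * norm (G x)\<bar>)"
    by (rule integral_abs_bound_integral[OF I]) (use In in \<open>auto simp: Cauchy_Schwarz_ineq2\<close>)
  also have "\<dots> \<le> L2normv \<Omega> F * L2normv \<Omega> G" using c F G by (auto simp: L2v_def L2normv_def)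
  finally show "\<bar>intO \<Omega> (\<lambda>x. F x \<bullet> G x)\<bar> \<le> L2normv \<Omega> F * L2normv \<Omega> G" .
qed

lemma L2_add: assumes "L2 \<Omega> f" "L2 \<Omega> g" shows "L2 \<Omega> (\<lambda>x. f x + g x)"
proof -
  have "integrable (lebesgue_on \<Omega>) (\<lambda>x. (f x)^2 + (g x)^2 + 2 * (f x * g x))"
    using assms L2_prod(1)[OF assms] by (auto simp: L2_def)
  then show ?thesis using assms by (auto simp: L2_def power2_sum algebra_simps)
qed

lemma L2_scale: assumes "L2 \<Omega> f" shows "L2 \<Omega> (\<lambda>x. c * f x)"
  using assms by (auto simp: L2_def power_mult_distrib)

lemma L2_uminus: assumes "L2 \<Omega> f" shows "L2 \<Omega> (\<lambda>x. - f x)"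
  using L2_scale[OF assms, of "-1"] by simp

lemma L2_diff: assumes "L2 \<Omega> f" "L2 \<Omega> g" shows "L2 \<Omega> (\<lambda>x. f x - g x)"
  using L2_add[OF assms(1) L2_uminus[OF assms(2)]] by simp

lemma L2v_add: fixes F G :: "real^'n \<Rightarrow> real^'n"
  assumes "L2v \<Omega> F" "L2v \<Omega> G" shows "L2v \<Omega> (\<lambda>x. F x + G x)"
proof -
  have "integrable (lebesgue_on \<Omega>) (\<lambda>x. (norm (F x))^2 + (norm (G x))^2 + 2 * (F x \<bullet> G x))"
    using assms L2v_inner(1)[OF assms] by (auto simp: L2v_def)
  moreover have "(norm (F x + G x))^2 = (norm (F x))^2 + (norm (G x))^2 + 2 * (F x \<bullet> G x)" for x
    by (simp add: power2_norm_eq_inner inner_add_left inner_add_right inner_commute)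
  ultimately show ?thesis using assms by (auto simp: L2v_def)
qed

lemma L2v_scale: fixes F :: "real^'n \<Rightarrow> real^'n"
  assumes "L2v \<Omega> F" shows "L2v \<Omega> (\<lambda>x. c *\<^sub>R F x)"
  using assms by (auto simp: L2v_def power_mult_distrib)

lemma L2v_diff: fixes F G :: "real^'n \<Rightarrow> real^'n"
  assumes "L2v \<Omega> F" "L2v \<Omega> G" shows "L2v \<Omega> (\<lambda>x. F x - G x)"
  using L2v_add[OF assms(1) L2v_scale[OF assms(2), of "-1"]] by simp

lemma L2norm_triangle:
  assumes "L2 \<Omega> f" "L2 \<Omega> g"
  shows "L2norm \<Omega> (\<lambda>x. f x + g x) \<le> L2norm \<Omega> f + L2norm \<Omega> g"
proof -
  have i: "integrable (lebesgue_on \<Omega>) (\<lambda>x. (f x)^2)" "integrable (lebesgue_on \<Omega>) (\<lambda>x. (g x)^2)"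
    using assms by (auto simp: L2_def)
  note p = L2_prod[OF assms]
  have e: "(\<lambda>x. (f x + g x)^2) = (\<lambda>x. ((f x)^2 + 2 * (f x * g x)) + (g x)^2)"
    by (auto simp: power2_sum)
  have "intO \<Omega> (\<lambda>x. (f x + g x)^2) = intO \<Omega> (\<lambda>x. (f x)^2) + 2 * intO \<Omega> (\<lambda>x. f x * g x) + intO \<Omega> (\<lambda>x. (g x)^2)"
    unfolding e using i p(1) by simp
  also have "\<dots> \<le> (L2norm \<Omega> f)^2 + 2 * (L2norm \<Omega> f * L2norm \<Omega> g) + (L2norm \<Omega> g)^2"
    using p(2) by (simp add: L2norm_sq)
  also have "\<dots> = (L2norm \<Omega> f + L2norm \<Omega> g)^2" by (simp add: power2_sum)
  finally have "(L2norm \<Omega> (\<lambda>x. f x + g x))^2 \<le> (L2norm \<Omega> f + L2norm \<Omega> g)^2" by (simp add: L2norm_sq)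
  then show ?thesis by (meson L2norm_nonneg add_nonneg_nonneg power2_le_imp_le)
qed

lemma L2norm_scale: "L2norm \<Omega> (\<lambda>x. c * f x) = \<bar>c\<bar> * L2norm \<Omega> f"
  by (simp add: L2norm_def power_mult_distrib real_sqrt_mult)

lemma L2norm_uminus: "L2norm \<Omega> (\<lambda>x. - f x) = L2norm \<Omega> f"
  by (simp add: L2norm_def)

lemma L2norm_triangle_diff:
  assumes "L2 \<Omega> f" "L2 \<Omega> g"
  shows "L2norm \<Omega> (\<lambda>x. f x - g x) \<le> L2norm \<Omega> f + L2norm \<Omega> g"
  using L2norm_triangle[OF assms(1) L2_uminus[OF assms(2)]] by (simp add: L2norm_uminus)

lemma L2normv_triangle:
  fixes F G :: "real^'n \<Rightarrow> real^'n"
  assumes "L2v \<Omega> F" "L2v \<Omega> G"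
  shows "L2normv \<Omega> (\<lambda>x. F x + G x) \<le> L2normv \<Omega> F + L2normv \<Omega> G"
proof -
  have i: "integrable (lebesgue_on \<Omega>) (\<lambda>x. (norm (F x))^2)" "integrable (lebesgue_on \<Omega>) (\<lambda>x. (norm (G x))^2)"
    using assms by (auto simp: L2v_def)
  note p = L2v_inner[OF assms]
  have e: "(norm (F x + G x))^2 = (norm (F x))^2 + 2 * (F x \<bullet> G x) + (norm (G x))^2" for x
    by (simp add: power2_norm_eq_inner inner_add_left inner_add_right inner_commute)
  have "intO \<Omega> (\<lambda>x. (norm (F x + G x))^2) = intO \<Omega> (\<lambda>x. (norm (F x))^2) + 2 * intO \<Omega> (\<lambda>x. F x \<bullet> G x) + intO \<Omega> (\<lambda>x. (norm (G x))^2)"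
    unfolding e using i p(1) by simp
  also have "\<dots> \<le> (L2normv \<Omega> F)^2 + 2 * (L2normv \<Omega> F * L2normv \<Omega> G) + (L2normv \<Omega> G)^2"
    using p(2) by (simp add: L2normv_sq)
  also have "\<dots> = (L2normv \<Omega> F + L2normv \<Omega> G)^2" by (simp add: power2_sum)
  finally have "(L2normv \<Omega> (\<lambda>x. F x + G x))^2 \<le> (L2normv \<Omega> F + L2normv \<Omega> G)^2" by (simp add: L2normv_sq)
  then show ?thesis by (meson L2normv_nonneg add_nonneg_nonneg power2_le_imp_le)
qed

lemma L2normv_scale: "L2normv \<Omega> (\<lambda>x. c *\<^sub>R F x) = \<bar>c\<bar> * L2normv \<Omega> F"
  by (simp add: L2normv_def power_mult_distrib real_sqrt_mult)

lemma L2norm_cong_AE: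
  assumes "f \<in> borel_measurable (lebesgue_on \<Omega>)" "g \<in> borel_measurable (lebesgue_on \<Omega>)" "AE x in lebesgue_on \<Omega>. f x = g x"
  shows "L2norm \<Omega> f = L2norm \<Omega> g"
proof -
  have "intO \<Omega> (\<lambda>x. (f x)^2) = intO \<Omega> (\<lambda>x. (g x)^2)"
    by (rule integral_cong_AE) (use assms in auto)
  then show ?thesis by (simp add: L2norm_def)
qed

lemma L2normv_cong_AE:
  fixes F G :: "real^'n \<Rightarrow> real^'n"
  assumes "F \<in> borel_measurable (lebesgue_on \<Omega>)" "G \<in> borel_measurable (lebesgue_on \<Omega>)" "AE x in lebesgue_on \<Omega>. F x = G x"
  shows "L2normv \<Omega> F = L2normv \<Omega> G"
proof -
  have "intO \<Omega> (\<lambda>x. (norm (F x))^2) = intO \<Omega> (\<lambda>x. (norm (G x))^2)"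
    by (rule integral_cong_AE) (use assms in auto)
  then show ?thesis by (simp add: L2normv_def)
qed

lemma L2_bounded:
  assumes fin: "finite_measure (lebesgue_on \<Omega>)"
    and m: "f \<in> borel_measurable (lebesgue_on \<Omega>)" and b: "\<And>x. x \<in> \<Omega> \<Longrightarrow> \<bar>f x\<bar> \<le> B"
  shows "L2 \<Omega> f"
proof -
  interpret finite_measure "lebesgue_on \<Omega>" by (rule fin)
  have iB: "integrable (lebesgue_on \<Omega>) (\<lambda>x. B^2)" by simp
  have aeB: "AE x in lebesgue_on \<Omega>. norm ((f x)^2) \<le> norm (B^2)"
  proof (intro AE_I2)
    fix x assume "x \<in> space (lebesgue_on \<Omega>)"
    then have x: "x \<in> \<Omega>" by simp
    have "\<bar>f x\<bar>^2 \<le> B^2" by (rule power_mono[OF b[OF x]]) simp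
    then show "norm ((f x)^2) \<le> norm (B^2)" by simp
  qed
  have "integrable (lebesgue_on \<Omega>) (\<lambda>x. (f x)^2)"
    by (rule Bochner_Integration.integrable_bound[OF iB _ aeB]) (use m in auto)
  then show ?thesis using m by (auto simp: L2_def)
qed

lemma L2v_bounded:
  fixes F :: "real^'n \<Rightarrow> real^'n"
  assumes fin: "finite_measure (lebesgue_on \<Omega>)"
    and m: "F \<in> borel_measurable (lebesgue_on \<Omega>)" and b: "\<And>x. x \<in> \<Omega> \<Longrightarrow> norm (F x) \<le> B"
  shows "L2v \<Omega> F"
proof -
  have "L2 \<Omega> (\<lambda>x. norm (F x))"
    by (rule L2_bounded[OF fin]) (use m b in auto)
  then show ?thesis using m by (auto simp: L2_def L2v_def)
qed

lemma L2_const: "finite_measure (lebesgue_on \<Omega>) \<Longrightarrow> L2 \<Omega> (\<lambda>x. c)"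
  by (rule L2_bounded[of _ _ "\<bar>c\<bar>"]) auto

lemma L2_integrable:
  assumes "finite_measure (lebesgue_on \<Omega>)" "L2 \<Omega> g"
  shows "integrable (lebesgue_on \<Omega>) g"
  using L2_prod(1)[OF assms(2) L2_const[OF assms(1), of 1]] by simp

lemma power2_add_le_2: "(a + b)^2 \<le> 2 * a^2 + 2 * (b::real)^2"
  using zero_le_power2[of "a - b"] by (simp add: power2_eq_square algebra_simps)

lemma power2_le_if_abs_le_affine:
  fixes y s :: real
  assumes "\<bar>y\<bar> \<le> K0 * \<bar>s\<bar> + K1"
  shows "y^2 \<le> 2 * K0^2 * s^2 + 2 * K1^2"
proof -
  have "y^2 = \<bar>y\<bar>^2" by simp
  also have "\<dots> \<le> (K0 * \<bar>s\<bar> + K1)^2" by (rule power_mono[OF assms]) simp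
  also have "\<dots> \<le> 2 * (K0 * \<bar>s\<bar>)^2 + 2 * K1^2" by (rule power2_add_le_2)
  also have "\<dots> = 2 * K0^2 * s^2 + 2 * K1^2" by (simp add: power_mult_distrib)
  finally show ?thesis .
qed

lemma L2_comp_affine_growth:
  assumes fm: "finite_measure (lebesgue_on \<Omega>)" and g: "L2 \<Omega> g" and c: "continuous_on UNIV \<beta>"
    and gr: "\<And>s. \<bar>\<beta> s\<bar> \<le> K0 * \<bar>s\<bar> + K1"
  shows "L2 \<Omega> (\<lambda>x. \<beta> (g x))"
proof -
  have m: "(\<lambda>x. \<beta> (g x)) \<in> borel_measurable (lebesgue_on \<Omega>)"
    using borel_measurable_continuous_on[OF c] g by (auto simp: L2_def)
  have i: "integrable (lebesgue_on \<Omega>) (\<lambda>x. 2 * K0^2 * (g x)^2 + 2 * K1^2)"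
    using g fm by (auto simp: L2_def intro!: finite_measure.integrable_const)
  have "(\<beta> s)^2 \<le> 2 * K0^2 * s^2 + 2 * K1^2" for s
    by (rule power2_le_if_abs_le_affine[OF gr[of s]])
  then have "integrable (lebesgue_on \<Omega>) (\<lambda>x. (\<beta> (g x))^2)"
    by (intro Bochner_Integration.integrable_bound[OF i]) (use m in \<open>auto intro!: AE_I2\<close>)
  then show ?thesis using m by (simp add: L2_def)
qed

section \<open>Smooth bump functions\<close>

text \<open>The flat functions \<open>t \<mapsto> p(1/t) exp(-1/t)\<close> (extended by 0 for \<open>t \<le> 0\<close>) are
  closed under differentiation, so the algebra they generate together with affine coordinate
  maps consists of smooth functions; products of them give smooth bumps on boxes.\<close>

definition flat_fun :: "real poly \<Rightarrow> real \<Rightarrow> real" where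
  "flat_fun p t = (if t > 0 then poly p (1/t) * exp (-1/t) else 0)"

definition flat_deriv_poly :: "real poly \<Rightarrow> real poly" where
  "flat_deriv_poly p = [:0,0,1:] * (p - pderiv p)"

lemma mult_poly_div_exp_tendsto_0:
  fixes p :: "real poly"
  shows "((\<lambda>s. s * poly p s / exp s) \<longlongrightarrow> 0) at_top"
proof -
  have e: "(\<lambda>s. s * poly p s / exp s) = (\<lambda>s. \<Sum>i\<le>degree p. coeff p i * (s ^ Suc i / exp s))"
  proof (intro ext)
    fix s :: real
    have "s * poly p s / exp s = (\<Sum>i\<le>degree p. s * (coeff p i * s ^ i)) / exp s"
      by (simp add: poly_altdef sum_distrib_left)
    also have "\<dots> = (\<Sum>i\<le>degree p. coeff p i * (s ^ Suc i / exp s))"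
      by (simp add: sum_divide_distrib mult.left_commute)
    finally show "s * poly p s / exp s = (\<Sum>i\<le>degree p. coeff p i * (s ^ Suc i / exp s))" .
  qed
  have "((\<lambda>s. \<Sum>i\<le>degree p. coeff p i * (s ^ Suc i / exp s)) \<longlongrightarrow> (\<Sum>i\<le>degree p. coeff p i * 0)) at_top"
    by (intro tendsto_intros tendsto_power_div_exp_0)
  then show ?thesis unfolding e by simp
qed

lemma flat_fun_has_real_derivative_0: "(flat_fun p has_real_derivative 0) (at 0)"
proof -
  have "((\<lambda>h. (flat_fun p (0 + h) - flat_fun p 0) / h) \<longlongrightarrow> 0) (at 0)"
  proof (rule filterlim_split_at)
    show "((\<lambda>h. (flat_fun p (0 + h) - flat_fun p 0) / h) \<longlongrightarrow> 0) (at_left 0)"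
    proof (rule tendsto_eventually)
      show "\<forall>\<^sub>F h in at_left 0. (flat_fun p (0 + h) - flat_fun p 0) / h = 0"
        by (simp add: eventually_at_left_field flat_fun_def) (auto intro: exI[of _ "-1"])
    qed
    have l: "((\<lambda>h. (\<lambda>s. s * poly p s / exp s) (inverse h)) \<longlongrightarrow> 0) (at_right 0)"
      by (rule filterlim_compose[OF mult_poly_div_exp_tendsto_0 filterlim_inverse_at_top_right])
    show "((\<lambda>h. (flat_fun p (0 + h) - flat_fun p 0) / h) \<longlongrightarrow> 0) (at_right 0)"
    proof (rule Lim_transform_eventually[OF l])
      show "\<forall>\<^sub>F h in at_right 0.
          inverse h * poly p (inverse h) / exp (inverse h) = (flat_fun p (0 + h) - flat_fun p 0) / h"
        by (simp add: eventually_at_right_field flat_fun_def) (auto intro!: exI[of _ 1] simp: exp_minus field_simps)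
    qed
  qed
  then show ?thesis by (simp add: DERIV_def)
qed

lemma flat_fun_has_real_derivative: "(flat_fun p has_real_derivative flat_fun (flat_deriv_poly p) t) (at t)"
proof -
  consider "t > 0" | "t < 0" | "t = 0" by linarith
  then show ?thesis
  proof cases
    case 1
    let ?g = "\<lambda>t. poly p (1/t) * exp (-1/t)"
    have "(?g has_real_derivative
            poly (pderiv p) (1/t) * (- 1 / t^2) * exp (-1/t) + poly p (1/t) * (exp (-1/t) * (1/t^2))) (at t)"
      using 1
      by (auto intro!: derivative_eq_intros DERIV_chain2[OF poly_DERIV] simp: power2_eq_square field_simps)
    moreover have "poly (pderiv p) (1/t) * (- 1 / t^2) * exp (-1/t) + poly p (1/t) * (exp (-1/t) * (1/t^2))
        = flat_fun (flat_deriv_poly p) t"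
      using 1 by (simp add: flat_fun_def flat_deriv_poly_def power2_eq_square field_simps)
    ultimately have d: "(?g has_real_derivative flat_fun (flat_deriv_poly p) t) (at t)" by simp
    show ?thesis
      by (rule has_field_derivative_transform_within_open[OF d, of "{0<..}"]) (use 1 in \<open>auto simp: flat_fun_def\<close>)
  next
    case 2
    have d: "((\<lambda>_. 0) has_real_derivative 0) (at t)" by simp
    have "(flat_fun p has_real_derivative 0) (at t)"
      by (rule has_field_derivative_transform_within_open[OF d, of "{..<0}"]) (use 2 in \<open>auto simp: flat_fun_def\<close>)
    then show ?thesis using 2 by (simp add: flat_fun_def)
  next
    case 3
    then show ?thesis using flat_fun_has_real_derivative_0 by (simp add: flat_fun_def)
  qed
qed

inductive_set flat_algebra :: "(real^'n \<Rightarrow> real) set" where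
  const: "(\<lambda>x. c) \<in> flat_algebra"
| flat_affine: "(\<lambda>x. flat_fun p (a * x$j + b)) \<in> flat_algebra"
| add: "f \<in> flat_algebra \<Longrightarrow> g \<in> flat_algebra \<Longrightarrow> (\<lambda>x. f x + g x) \<in> flat_algebra"
| mult: "f \<in> flat_algebra \<Longrightarrow> g \<in> flat_algebra \<Longrightarrow> (\<lambda>x. f x * g x) \<in> flat_algebra"

lemma flat_algebra_has_derivative:
  fixes f :: "real^'n \<Rightarrow> real"
  assumes "f \<in> flat_algebra"
  shows "\<exists>D. (\<forall>x. (f has_derivative D x) (at x)) \<and> (\<forall>v. (\<lambda>x. D x v) \<in> flat_algebra)"
  using assms
proof induction
  case (const c)
  show ?case by (rule exI[of _ "\<lambda>x v. 0"]) (auto intro: flat_algebra.const)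
next
  case (flat_affine p a j b)
  have lin: "((\<lambda>x::real^'n. a * x$j + b) has_derivative (\<lambda>v. a * v$j)) (at x)" for x
    by (auto intro!: derivative_eq_intros bounded_linear_vec_nth[THEN bounded_linear_imp_has_derivative])
  have "((\<lambda>x. flat_fun p (a * x$j + b)) has_derivative (\<lambda>v. flat_fun (flat_deriv_poly p) (a * x$j + b) * (a * v$j))) (at x)" for x
    using has_derivative_compose[OF lin flat_fun_has_real_derivative[unfolded has_field_derivative_def]] by simp
  moreover have "(\<lambda>x. flat_fun (flat_deriv_poly p) (a * x$j + b) * (a * v$j)) \<in> flat_algebra" for v
    by (intro flat_algebra.mult flat_algebra.flat_affine flat_algebra.const)
  ultimately show ?case by (intro exI[of _ "\<lambda>x v. flat_fun (flat_deriv_poly p) (a * x$j + b) * (a * v$j)"]) auto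
next
  case (add f g)
  then obtain Df Dg where f: "\<forall>x. (f has_derivative Df x) (at x)" "\<forall>v. (\<lambda>x. Df x v) \<in> flat_algebra"
    and g: "\<forall>x. (g has_derivative Dg x) (at x)" "\<forall>v. (\<lambda>x. Dg x v) \<in> flat_algebra" by blast
  show ?case
    by (rule exI[of _ "\<lambda>x v. Df x v + Dg x v"]) (use f g in \<open>auto intro: has_derivative_add flat_algebra.add\<close>)
next
  case (mult f g)
  then obtain Df Dg where f: "\<forall>x. (f has_derivative Df x) (at x)" "\<forall>v. (\<lambda>x. Df x v) \<in> flat_algebra"
    and g: "\<forall>x. (g has_derivative Dg x) (at x)" "\<forall>v. (\<lambda>x. Dg x v) \<in> flat_algebra"
    and fS: "f \<in> flat_algebra" and gS: "g \<in> flat_algebra" by blast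
  show ?case
  proof (rule exI[of _ "\<lambda>x v. f x * Dg x v + Df x v * g x"], intro conjI allI)
    fix x show "((\<lambda>x. f x * g x) has_derivative (\<lambda>v. f x * Dg x v + Df x v * g x)) (at x)"
      using f g by (auto intro: has_derivative_mult)
  next
    fix v show "(\<lambda>x. f x * Dg x v + Df x v * g x) \<in> flat_algebra"
      by (rule flat_algebra.add; rule flat_algebra.mult) (use f g fS gS in auto)
  qed
qed

lemma flat_algebra_continuous: "f \<in> flat_algebra \<Longrightarrow> continuous_on UNIV f"
  using flat_algebra_has_derivative[of f]
  by (meson continuous_at_imp_continuous_on has_derivative_continuous)

lemma flat_algebra_Ck: "f \<in> flat_algebra \<Longrightarrow> Ck k f"
proof (induction k arbitrary: f)
  case 0 then show ?case by (simp add: flat_algebra_continuous)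
next
  case (Suc k)
  obtain D where D: "\<forall>x. (f has_derivative D x) (at x)" "\<forall>v. (\<lambda>x. D x v) \<in> flat_algebra"
    using flat_algebra_has_derivative[OF Suc.prems] by blast
  have fd: "frechet_derivative f (at x) = D x" for x using D(1) frechet_derivative_at by metis
  show ?case using Suc.prems Suc.IH D by (auto simp: flat_algebra_continuous fd differentiable_def)
qed

lemma flat_algebra_prod: "finite S \<Longrightarrow> (\<And>j. j \<in> S \<Longrightarrow> g j \<in> flat_algebra) \<Longrightarrow> (\<lambda>x. \<Prod>j\<in>S. g j x) \<in> flat_algebra"
proof (induction S rule: finite_induct)
  case empty then show ?case by (simp add: flat_algebra.const)
next
  case (insert j S) then show ?case by (simp add: flat_algebra.mult)
qed

definition box_bump :: "real^'n \<Rightarrow> real^'n \<Rightarrow> real \<Rightarrow> real^'n \<Rightarrow> real" where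
  "box_bump a b k x = (\<Prod>j\<in>UNIV. flat_fun 1 (k * x$j + (-(k*a$j))) * flat_fun 1 ((-k) * x$j + k * b$j))"

lemma flat_fun_1: "flat_fun 1 t = (if t > 0 then exp (-1/t) else 0)" by (simp add: flat_fun_def)

lemma flat_fun_1_bounds: "0 \<le> flat_fun 1 t" "flat_fun 1 t \<le> 1"
  by (auto simp: flat_fun_1)

lemma box_bump_flat_algebra: "box_bump a b k \<in> flat_algebra"
  unfolding box_bump_def[abs_def]
  by (intro flat_algebra_prod flat_algebra.mult) (simp, rule flat_algebra.flat_affine, rule flat_algebra.flat_affine)

lemma box_bump_bounds: "0 \<le> box_bump a b k x" "box_bump a b k x \<le> 1"
  unfolding box_bump_def
  by (auto intro!: prod_nonneg prod_le_1 mult_nonneg_nonneg mult_le_one flat_fun_1_bounds)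

lemma box_bump_nonzero_in_box:
  assumes k: "k > 0" and "box_bump a b k x \<noteq> 0"
  shows "x \<in> box a b"
proof -
  have "\<forall>j. flat_fun 1 (k * x$j + (-(k*a$j))) \<noteq> 0 \<and> flat_fun 1 ((-k) * x$j + k * b$j) \<noteq> 0"
    using assms(2) unfolding box_bump_def by auto
  then have "\<forall>j. k * (x$j - a$j) > 0 \<and> k * (b$j - x$j) > 0"
    by (auto simp: flat_fun_1 algebra_simps split: if_splits)
  then have "\<forall>j. a$j < x$j \<and> x$j < b$j" using k by (auto simp: zero_less_mult_iff)
  then show ?thesis by (simp add: mem_box_cart)
qed

lemma box_bump_test_fun:
  assumes k: "k > 0" and sub: "cbox a b \<subseteq> \<Omega>"
  shows "test_fun \<Omega> (box_bump a b k)"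
proof -
  have s: "{x. box_bump a b k x \<noteq> 0} \<subseteq> cbox a b" using box_bump_nonzero_in_box[OF k] box_subset_cbox by blast
  have c: "closure {x. box_bump a b k x \<noteq> 0} \<subseteq> cbox a b"
    by (rule closure_minimal[OF s closed_cbox])
  have "compact (closure {x. box_bump a b k x \<noteq> 0})"
    by (rule compact_Int_closed[of "cbox a b" "closure {x. box_bump a b k x \<noteq> 0}", simplified Int_absorb1[OF c]])
      auto
  moreover have "smooth_fun (box_bump a b k)" using flat_algebra_Ck[OF box_bump_flat_algebra] by (auto simp: smooth_fun_def)
  ultimately show ?thesis using c sub by (auto simp: test_fun_def)
qed

lemma box_bump_tendsto_indicator: "(\<lambda>n. box_bump a b (real (Suc n)) x) \<longlonglongrightarrow> indicator (box a b) x"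
proof (cases "x \<in> box a b")
  case True
  then have ab: "\<forall>j. a$j < x$j \<and> x$j < b$j" by (simp add: mem_box_cart)
  have lim1: "(\<lambda>n. flat_fun 1 (real (Suc n) * s)) \<longlonglongrightarrow> 1" if s: "s > 0" for s
  proof -
    have "(\<lambda>n. exp (- (1 / s) * inverse (real (Suc n)))) \<longlonglongrightarrow> exp (- (1/s) * 0)"
      by (intro tendsto_intros LIMSEQ_inverse_real_of_nat)
    moreover have "flat_fun 1 (real (Suc n) * s) = exp (- (1 / s) * inverse (real (Suc n)))" for n
      using s by (simp add: flat_fun_1 field_simps add_pos_nonneg)
    ultimately show ?thesis by simp
  qed
  have "(\<lambda>n. \<Prod>j\<in>UNIV. flat_fun 1 (real (Suc n) * (x$j - a$j)) * flat_fun 1 (real (Suc n) * (b$j - x$j)))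
        \<longlonglongrightarrow> (\<Prod>j\<in>(UNIV::'a set). 1 * 1)"
    by (intro tendsto_prod tendsto_mult lim1) (use ab in auto)
  moreover have "box_bump a b (real (Suc n)) x = (\<Prod>j\<in>UNIV. flat_fun 1 (real (Suc n) * (x$j - a$j)) * flat_fun 1 (real (Suc n) * (b$j - x$j)))" for n
    unfolding box_bump_def by (simp add: algebra_simps)
  ultimately show ?thesis using True by simp
next
  case False
  have "box_bump a b (real (Suc n)) x = 0" for n
    using box_bump_nonzero_in_box[of "real (Suc n)" a b x] False by auto
  then show ?thesis using False by simp
qed

section \<open>The fundamental lemma of the calculus of variations\<close>

lemma cbox_Int_cbox_cart:
  fixes a b c d :: "real^'n"
  shows "cbox a b \<inter> cbox c d = cbox (\<chi> i. max (a$i) (c$i)) (\<chi> i. min (b$i) (d$i))"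
  using Int_interval_cart[of a b c d] by (simp add: interval_cbox_cart)

definition boxes_union :: "((real^'n) \<times> (real^'n)) list \<Rightarrow> (real^'n) set" where
  "boxes_union L = (\<Union>p\<in>set L. cbox (fst p) (snd p))"

lemma boxes_union_sets [simp]: "boxes_union L \<in> sets lebesgue"
  unfolding boxes_union_def by (intro sets.finite_UN) auto

locale test_orthogonal =
  fixes \<Omega> :: "(real^'n) set" and g :: "real^'n \<Rightarrow> real"
  assumes open_domain: "open \<Omega>"
    and g_integrable: "integrable (lebesgue_on \<Omega>) g"
    and orthogonal: "\<And>\<phi>. test_fun \<Omega> \<phi> \<Longrightarrow> intO \<Omega> (\<lambda>x. g x * \<phi> x) = 0"
begin

abbreviation "M \<equiv> lebesgue_on \<Omega>"

lemma domain_sets: "\<Omega> \<in> sets lebesgue"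
  using open_domain by (auto intro: borel_open)

lemma indicator_measurable: "A \<in> sets lebesgue \<Longrightarrow> indicator A \<in> borel_measurable M"
  by (rule borel_measurable_indicator') (use domain_sets in \<open>auto simp: sets_restrict_space_iff\<close>)

lemma mult_indicator_integrable:
  assumes "A \<in> sets lebesgue"
  shows "integrable M (\<lambda>x. g x * indicator A x)"
proof (rule Bochner_Integration.integrable_bound[of _ "\<lambda>x. \<bar>g x\<bar>"])
  show "(\<lambda>x. g x * indicator A x) \<in> borel_measurable M"
    using g_integrable indicator_measurable[OF assms] by (intro borel_measurable_times) auto
qed (use g_integrable in \<open>auto simp: indicator_def\<close>)

lemma integral_mult_limit_zero:
  assumes meas: "\<And>n. h n \<in> borel_measurable M" and bound: "\<And>n x. \<bar>h n x\<bar> \<le> 1"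
    and lim: "\<And>x. (\<lambda>n. h n x) \<longlonglongrightarrow> h0 x" and zero: "\<And>n. intO \<Omega> (\<lambda>x. g x * h n x) = 0"
  shows "intO \<Omega> (\<lambda>x. g x * h0 x) = 0"
proof -
  have "h0 \<in> borel_measurable M" by (rule borel_measurable_LIMSEQ_real[OF lim meas])
  then have "(\<lambda>n. intO \<Omega> (\<lambda>x. g x * h n x)) \<longlonglongrightarrow> intO \<Omega> (\<lambda>x. g x * h0 x)"
  proof (intro integral_dominated_convergence[where w="\<lambda>x. \<bar>g x\<bar>"])
    show "AE x in M. (\<lambda>n. g x * h n x) \<longlonglongrightarrow> g x * h0 x"
      by (intro AE_I2 tendsto_mult tendsto_const lim)
    show "AE x in M. norm (g x * h n x) \<le> \<bar>g x\<bar>" for n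
      using bound by (intro AE_I2) (simp add: abs_mult mult_left_le)
  qed (use g_integrable meas in auto)
  then show ?thesis using zero by (simp add: LIMSEQ_const_iff)
qed

lemma integral_box_zero:
  assumes "cbox a b \<subseteq> \<Omega>"
  shows "intO \<Omega> (\<lambda>x. g x * indicator (box a b) x) = 0"
proof (rule integral_mult_limit_zero)
  show "box_bump a b (real (Suc n)) \<in> borel_measurable M" for n
    by (rule continuous_imp_measurable_on_sets_lebesgue[OF _ domain_sets])
       (use flat_algebra_continuous[OF box_bump_flat_algebra] continuous_on_subset in blast)
  show "\<bar>box_bump a b (real (Suc n)) x\<bar> \<le> 1" for n x by (metis abs_of_nonneg box_bump_bounds)
  show "intO \<Omega> (\<lambda>x. g x * box_bump a b (real (Suc n)) x) = 0" for n
    by (rule orthogonal[OF box_bump_test_fun[OF _ assms]]) simp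
qed (rule box_bump_tendsto_indicator)

lemma integral_cbox_zero:
  assumes "cbox a b \<subseteq> \<Omega>"
  shows "intO \<Omega> (\<lambda>x. g x * indicator (cbox a b) x) = 0"
proof -
  have "cbox a b - box a b \<in> null_sets lebesgue"
    using negligible_frontier_interval negligible_iff_null_sets by blast
  then have "AE x in lebesgue. x \<notin> cbox a b - box a b" by (rule AE_not_in)
  then have "AE x in M. g x * indicator (cbox a b) x = g x * indicator (box a b) x"
    by (subst AE_restrict_space_iff)
       (use domain_sets box_subset_cbox in \<open>auto simp: indicator_def elim!: eventually_mono\<close>)
  then have "intO \<Omega> (\<lambda>x. g x * indicator (cbox a b) x) = intO \<Omega> (\<lambda>x. g x * indicator (box a b) x)"
    using mult_indicator_integrable[of "cbox a b"] mult_indicator_integrable[of "box a b"]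
    by (intro integral_cong_AE) auto
  then show ?thesis using integral_box_zero[OF assms] by simp
qed

text \<open>Induction on the number of boxes, by inclusion-exclusion: the intersection of a box with
  a union of n boxes is again a union of n boxes.\<close>
lemma integral_boxes_union_zero:
  "(\<forall>p\<in>set L. cbox (fst p) (snd p) \<subseteq> \<Omega>) \<Longrightarrow> intO \<Omega> (\<lambda>x. g x * indicator (boxes_union L) x) = 0"
proof (induction "length L" arbitrary: L rule: less_induct)
  case less
  show ?case
  proof (cases L)
    case Nil then show ?thesis by (simp add: boxes_union_def)
  next
    case (Cons p L')
    obtain a b where p: "p = (a, b)" by (cases p)
    define L2 where "L2 = map (\<lambda>q. ((\<chi> i. max (a$i) (fst q $ i)), (\<chi> i. min (b$i) (snd q $ i)))) L'"
    have "boxes_union L2 = (\<Union>q\<in>set L'. cbox a b \<inter> cbox (fst q) (snd q))"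
      unfolding boxes_union_def L2_def by (simp add: cbox_Int_cbox_cart)
    then have int: "cbox a b \<inter> boxes_union L' = boxes_union L2"
      unfolding boxes_union_def by blast
    have sub2: "\<forall>q\<in>set L2. cbox (fst q) (snd q) \<subseteq> \<Omega>"
      using less.prems Cons p by (auto simp: L2_def cbox_Int_cbox_cart[symmetric])
    have z1: "intO \<Omega> (\<lambda>x. g x * indicator (cbox a b) x) = 0"
      by (rule integral_cbox_zero) (use less.prems Cons p in auto)
    have z2: "intO \<Omega> (\<lambda>x. g x * indicator (boxes_union L') x) = 0"
      by (rule less.hyps) (use less.prems Cons in auto)
    have z3: "intO \<Omega> (\<lambda>x. g x * indicator (boxes_union L2) x) = 0"
      by (rule less.hyps) (use sub2 Cons L2_def in auto)
    have "boxes_union L = cbox a b \<union> boxes_union L'" using Cons p by (simp add: boxes_union_def)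
    then have e: "(\<lambda>x. g x * indicator (boxes_union L) x) = (\<lambda>x. g x * indicator (cbox a b) x
        + g x * indicator (boxes_union L') x - g x * indicator (boxes_union L2) x)"
      unfolding int[symmetric] by (auto simp: indicator_union_arith indicator_inter_arith algebra_simps)
    show ?thesis
      unfolding e using z1 z2 z3 mult_indicator_integrable[of "cbox a b"] mult_indicator_integrable[of "boxes_union L'"]
        mult_indicator_integrable[of "boxes_union L2"]
      by simp
  qed
qed

lemma integral_open_zero:
  assumes "open S"
  shows "intO \<Omega> (\<lambda>x. g x * indicator S x) = 0"
proof -
  have S': "open (\<Omega> \<inter> S)" using assms open_domain by auto
  obtain D where D: "countable D" "D \<subseteq> Pow (\<Omega> \<inter> S)" "\<And>X. X \<in> D \<Longrightarrow> \<exists>a b. X = cbox a b" "\<Union>D = \<Omega> \<inter> S"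
    using open_countable_Union_open_cbox[OF S'] by metis
  have e: "intO \<Omega> (\<lambda>x. g x * indicator S x) = intO \<Omega> (\<lambda>x. g x * indicator (\<Omega> \<inter> S) x)"
    by (rule Bochner_Integration.integral_cong) (auto simp: indicator_def)
  show ?thesis
  proof (cases "D = {}")
    case True
    then show ?thesis unfolding e using D by simp
  next
    case False
    define C where "C = from_nat_into D"
    have rC: "range C = D" using False D(1) by (simp add: C_def)
    have "\<forall>n. \<exists>ab. C n = cbox (fst ab) (snd ab)"
      using D(3) rC by (metis rangeI fst_conv snd_conv)
    then obtain ab where ab: "\<And>n. C n = cbox (fst (ab n)) (snd (ab n))" by metis
    have CS: "(\<Union>n. C n) = \<Omega> \<inter> S" using rC D(4) by simp
    have Csub: "C n \<subseteq> \<Omega>" for n using rC D(2) by blast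
    have V: "(\<Union>i<n. C i) = boxes_union (map ab [0..<n])" for n
      by (auto simp: boxes_union_def ab)
    have "intO \<Omega> (\<lambda>x. g x * indicator (\<Union>i. C i) x) = 0"
    proof (rule integral_mult_limit_zero)
      show "indicator (\<Union>i<n. C i) \<in> borel_measurable M" for n
        unfolding V by (rule indicator_measurable) simp
      show "(\<lambda>n. indicator (\<Union>i<n. C i) x) \<longlonglongrightarrow> (indicator (\<Union>i. C i) x :: real)" for x
        by (rule LIMSEQ_indicator_UN)
      show "intO \<Omega> (\<lambda>x. g x * indicator (\<Union>i<n. C i) x) = 0" for n
        unfolding V by (rule integral_boxes_union_zero) (use Csub ab in auto)
    qed (simp add: indicator_def)
    then show ?thesis unfolding e CS .
  qed
qed

text \<open>The set where g is positive is a G-delta set up to a null set, and g integrates to 0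
  over every finite intersection of open sets.\<close>
lemma AE_nonpos: "AE x in M. g x \<le> 0"
proof -
  define A where "A = {x \<in> \<Omega>. 0 < g x}"
  have "{x \<in> space M. 0 < g x} \<in> sets M"
    using g_integrable borel_measurable_iff_greater by blast
  then have AL: "A \<in> sets lebesgue" using domain_sets by (simp add: A_def sets_restrict_space_iff)
  obtain C T where "gdelta C" and T: "T \<in> null_sets lebesgue" "A \<union> T = C"
    using lebesgue_set_almost_gdelta[OF AL] by metis
  then obtain F where F: "\<And>n::nat. open (F n)" and C: "C = (\<Inter>n. F n)"
    by (metis gdelta.cases)
  have zero: "intO \<Omega> (\<lambda>x. g x * indicator C x) = 0"
    unfolding C
  proof (rule integral_mult_limit_zero)
    show "indicator (\<Inter>i<n. F i) \<in> borel_measurable M" for n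
    proof (rule indicator_measurable)
      have "open (\<Inter>i<n. F i)" using F by (intro open_INT) auto
      then show "(\<Inter>i<n. F i) \<in> sets lebesgue" by (auto intro: borel_open)
    qed
    show "(\<lambda>n. indicator (\<Inter>i<n. F i) x) \<longlonglongrightarrow> (indicator (\<Inter>i. F i) x :: real)" for x
      by (rule LIMSEQ_indicator_INT)
    show "intO \<Omega> (\<lambda>x. g x * indicator (\<Inter>i<n. F i) x) = 0" for n
      using F by (intro integral_open_zero) auto
  qed (simp add: indicator_def)
  have CL: "C \<in> sets lebesgue"
    unfolding T(2)[symmetric] by (intro sets.Un AL null_setsD2[OF T(1)])
  have "AE x in M. g x * indicator C x = g x * indicator A x"
  proof -
    have "AE x in lebesgue. x \<notin> T" using T(1) by (rule AE_not_in)
    then show ?thesis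
      by (subst AE_restrict_space_iff) (use domain_sets T(2) in \<open>auto simp: indicator_def elim!: eventually_mono\<close>)
  qed
  then have "intO \<Omega> (\<lambda>x. g x * indicator C x) = intO \<Omega> (\<lambda>x. g x * indicator A x)"
    using mult_indicator_integrable[OF AL] mult_indicator_integrable[OF CL] by (intro integral_cong_AE) auto
  with zero have "intO \<Omega> (\<lambda>x. g x * indicator A x) = 0" by simp
  moreover have "AE x in M. 0 \<le> g x * indicator A x" by (auto simp: A_def indicator_def)
  ultimately have "AE x in M. g x * indicator A x = 0"
    using integral_nonneg_eq_0_iff_AE[OF mult_indicator_integrable[OF AL]] by simp
  then show ?thesis using AE_space[of M]
    by eventually_elim (auto simp: A_def indicator_def split: if_splits)
qed

end

lemma fundamental_lemma_calculus_of_variations: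
  fixes \<Omega> :: "(real^'n) set"
  assumes "open \<Omega>" and "integrable (lebesgue_on \<Omega>) g"
    and "\<And>\<phi>. test_fun \<Omega> \<phi> \<Longrightarrow> intO \<Omega> (\<lambda>x. g x * \<phi> x) = 0"
  shows "AE x in lebesgue_on \<Omega>. g x = 0"
proof -
  interpret pos: test_orthogonal \<Omega> g using assms by unfold_locales
  interpret neg: test_orthogonal \<Omega> "\<lambda>x. - g x" using assms by unfold_locales auto
  show ?thesis using pos.AE_nonpos neg.AE_nonpos by eventually_elim auto
qed

lemma bounded_if_zero_outside_compact:
  fixes h :: "'a::topological_space \<Rightarrow> 'b::real_normed_vector"
  assumes "continuous_on UNIV h" "compact K" "\<And>x. x \<notin> K \<Longrightarrow> h x = 0"
  obtains B where "\<And>x. norm (h x) \<le> B"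
proof -
  have "bounded (h ` K)"
    by (rule compact_imp_bounded[OF compact_continuous_image[OF continuous_on_subset[OF assms(1)] assms(2)]]) simp
  then obtain B where "\<And>y. y \<in> h ` K \<Longrightarrow> norm y \<le> B" unfolding bounded_iff by metis
  then have "norm (h x) \<le> max B 0" for x using assms(3)[of x] by (cases "x \<in> K") force+
  then show ?thesis by (rule that)
qed

lemma grad_zero_outside_closed:
  assumes "closed K" "\<And>x. x \<notin> K \<Longrightarrow> \<phi> x = 0" "x \<notin> K"
  shows "grad \<phi> x = 0"
proof -
  have d0: "((\<lambda>_. 0) has_derivative (\<lambda>_. 0)) (at x)" by simp
  have "(\<phi> has_derivative (\<lambda>_. 0)) (at x)"
    by (rule has_derivative_transform_within_open[OF d0, of "- K"]) (use assms in auto)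
  then have "frechet_derivative \<phi> (at x) = (\<lambda>_. 0)" by (metis frechet_derivative_at)
  then show ?thesis by (simp add: grad_def vec_eq_iff)
qed

lemma test_fun_H10:
  fixes \<Omega> :: "(real^'n) set"
  assumes OmL: "\<Omega> \<in> sets lebesgue" and fin: "finite_measure (lebesgue_on \<Omega>)"
    and t: "test_fun \<Omega> \<phi>"
  shows "H10 \<Omega> \<phi> (grad \<phi>)"
proof -
  define K where "K = closure {x. \<phi> x \<noteq> 0}"
  have K: "compact K" using t by (simp add: test_fun_def K_def)
  have "Ck 1 \<phi>" using t by (simp add: test_fun_def smooth_fun_def)
  then have cphi: "continuous_on UNIV \<phi>" and cg: "continuous_on UNIV (grad \<phi>)"
    unfolding grad_def[abs_def] by (auto intro!: continuous_on_vec_lambda)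
  have phi0: "\<phi> x = 0" if "x \<notin> K" for x
    using that closure_subset[of "{x. \<phi> x \<noteq> 0}"] by (auto simp: K_def)
  have g0: "grad \<phi> x = 0" if "x \<notin> K" for x
    by (rule grad_zero_outside_closed[OF compact_imp_closed[OF K] phi0 that])
  obtain B1 where b1: "\<And>x. \<bar>\<phi> x\<bar> \<le> B1"
    using bounded_if_zero_outside_compact[OF cphi K phi0] by (metis real_norm_def)
  obtain B2 where b2: "\<And>x. norm (grad \<phi> x) \<le> B2"
    using bounded_if_zero_outside_compact[OF cg K g0] by metis
  have m1: "\<phi> \<in> borel_measurable (lebesgue_on \<Omega>)"
    by (rule continuous_imp_measurable_on_sets_lebesgue[OF continuous_on_subset[OF cphi] OmL]) simp
  have m2: "grad \<phi> \<in> borel_measurable (lebesgue_on \<Omega>)"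
    by (rule continuous_imp_measurable_on_sets_lebesgue[OF continuous_on_subset[OF cg] OmL]) simp
  have "L2 \<Omega> \<phi>" by (rule L2_bounded[OF fin m1 b1])
  moreover have "L2v \<Omega> (grad \<phi>)" by (rule L2v_bounded[OF fin m2 b2])
  moreover have "\<exists>s. (\<forall>k. test_fun \<Omega> (s k)) \<and>
          (\<lambda>k. L2norm \<Omega> (\<lambda>x. s k x - \<phi> x)) \<longlonglongrightarrow> 0 \<and>
          (\<lambda>k. L2normv \<Omega> (\<lambda>x. grad (s k) x - grad \<phi> x)) \<longlonglongrightarrow> 0"
    by (rule exI[of _ "\<lambda>k. \<phi>"]) (simp add: t L2norm_def L2normv_def)
  ultimately show ?thesis by (simp add: H10_def)
qed

section \<open>Norms on the discrete space\<close>

lemma bounded_seq_convergent_subseq_finite: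
  fixes f :: "nat \<Rightarrow> nat \<Rightarrow> real"
  assumes "finite J" and b: "\<And>n i. \<bar>f n i\<bar> \<le> B"
  shows "\<exists>r l. strict_mono r \<and> (\<forall>i\<in>J. (\<lambda>n. f (r n) i) \<longlonglongrightarrow> l i)"
  using assms(1)
proof (induction J rule: finite_induct)
  case empty show ?case by (rule exI[of _ id]) (auto simp: strict_mono_def)
next
  case (insert j J)
  then obtain r l where r: "strict_mono r" "\<forall>i\<in>J. (\<lambda>n. f (r n) i) \<longlonglongrightarrow> l i" by blast
  have "bounded (range (\<lambda>n. f (r n) j))"
    unfolding bounded_iff using b by (intro exI[of _ B]) auto
  then obtain lj r2 where r2: "strict_mono r2" "((\<lambda>n. f (r n) j) \<circ> r2) \<longlonglongrightarrow> lj"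
    using bounded_imp_convergent_subsequence by blast
  show ?case
  proof (intro exI conjI ballI)
    show "strict_mono (r \<circ> r2)" using r(1) r2(1) by (rule strict_mono_o)
    fix i assume "i \<in> insert j J"
    show "(\<lambda>n. f ((r \<circ> r2) n) i) \<longlonglongrightarrow> (l(j := lj)) i"
    proof (cases "i = j")
      case True then show ?thesis using r2(2) by (simp add: o_def)
    next
      case False
      then have "i \<in> J" using \<open>i \<in> insert j J\<close> by simp
      then have "((\<lambda>n. f (r n) i) \<circ> r2) \<longlonglongrightarrow> l i"
        using r(2) r2(1) LIMSEQ_subseq_LIMSEQ by blast
      then show ?thesis using False by (simp add: o_def)
    qed
  qed
qed

definition kronecker :: "nat \<Rightarrow> nat \<Rightarrow> real" where "kronecker i = (\<lambda>k. if k = i then 1 else 0)"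

lemma XD0_iff: "v \<in> XD0 I Ib \<longleftrightarrow> (\<forall>k. k \<notin> I - Ib \<longrightarrow> v k = 0)"
  by (auto simp: XD0_def)

lemma XD0_lin: "v \<in> XD0 I Ib \<Longrightarrow> w \<in> XD0 I Ib \<Longrightarrow> (\<lambda>k. a * v k + b * w k) \<in> XD0 I Ib"
  by (auto simp: XD0_def)

lemma XD0_kronecker: "i \<in> I - Ib \<Longrightarrow> kronecker i \<in> XD0 I Ib"
  by (auto simp: XD0_def kronecker_def)

lemma XD0_zero: "(\<lambda>k. 0) \<in> XD0 I Ib" by (auto simp: XD0_def)

lemma sum_kronecker: "finite S \<Longrightarrow> (\<Sum>i\<in>S. c i * kronecker i k) = (if k \<in> S then c k else 0)"
proof -
  assume "finite S"
  have "(\<Sum>i\<in>S. c i * kronecker i k) = (\<Sum>i\<in>S. if k = i then c i else 0)" by (rule sum.cong) (auto simp: kronecker_def)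
  also have "\<dots> = (if k \<in> S then c k else 0)" using \<open>finite S\<close> by (simp add: sum.delta)
  finally show ?thesis .
qed

lemma XD0_sum_kronecker: "finite S \<Longrightarrow> S \<subseteq> I - Ib \<Longrightarrow> (\<lambda>k. \<Sum>i\<in>S. c i * kronecker i k) \<in> XD0 I Ib"
  by (auto simp: XD0_iff sum_kronecker)

lemma XD0_kronecker_expansion: "finite I \<Longrightarrow> v \<in> XD0 I Ib \<Longrightarrow> v = (\<lambda>k. \<Sum>i\<in>I - Ib. v i * kronecker i k)"
  by (rule ext) (auto simp: XD0_iff sum_kronecker)

lemma subadditive_le_sum_kronecker:
  assumes fin: "finite I"
    and P1: "\<And>v w. v \<in> XD0 I Ib \<Longrightarrow> w \<in> XD0 I Ib \<Longrightarrow> P (\<lambda>k. v k + w k) \<le> P v + P w"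
    and P2: "\<And>v c. v \<in> XD0 I Ib \<Longrightarrow> P (\<lambda>k. c * v k) \<le> \<bar>c\<bar> * P v"
    and v: "v \<in> XD0 I Ib"
  shows "P v \<le> (\<Sum>i\<in>I - Ib. \<bar>v i\<bar> * P (kronecker i))"
proof -
  have "S \<subseteq> I - Ib \<Longrightarrow> P (\<lambda>k. \<Sum>i\<in>S. v i * kronecker i k) \<le> (\<Sum>i\<in>S. \<bar>v i\<bar> * P (kronecker i))" for S
  proof (induction S rule: infinite_finite_induct)
    case (infinite S)
    have "P (\<lambda>k. 0) = P (\<lambda>k. 0 * (0::real))" by simp
    also have "\<dots> \<le> \<bar>0\<bar> * P (\<lambda>k. 0)" by (rule P2[OF XD0_zero])
    finally show ?case using infinite by simp
  next
    case empty
    have "P (\<lambda>k. 0) = P (\<lambda>k. 0 * (0::real))" by simp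
    also have "\<dots> \<le> \<bar>0\<bar> * P (\<lambda>k. 0)" by (rule P2[OF XD0_zero])
    finally show ?case by simp
  next
    case (insert j S)
    have s1: "(\<lambda>k. \<Sum>i\<in>S. v i * kronecker i k) \<in> XD0 I Ib" using insert fin by (intro XD0_sum_kronecker) auto
    have dj: "kronecker j \<in> XD0 I Ib" using insert by (intro XD0_kronecker) auto
    have "P (\<lambda>k. \<Sum>i\<in>insert j S. v i * kronecker i k) = P (\<lambda>k. (\<lambda>k. v j * kronecker j k) k + (\<lambda>k. \<Sum>i\<in>S. v i * kronecker i k) k)"
      using insert by simp
    also have "\<dots> \<le> P (\<lambda>k. v j * kronecker j k) + P (\<lambda>k. \<Sum>i\<in>S. v i * kronecker i k)"
      by (rule P1[OF _ s1]) (use XD0_lin[OF dj dj, of "v j" 0] in simp)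
    also have "\<dots> \<le> \<bar>v j\<bar> * P (kronecker j) + (\<Sum>i\<in>S. \<bar>v i\<bar> * P (kronecker i))"
      using P2[OF dj, of "v j"] insert by (intro add_mono) auto
    finally show ?case using insert by simp
  qed
  from this[of "I - Ib"] show ?thesis using XD0_kronecker_expansion[OF fin v] by simp
qed

lemma subadditive_le_0_at_coordinate_limit:
  assumes fin: "finite I"
    and P1: "\<And>v w. v \<in> XD0 I Ib \<Longrightarrow> w \<in> XD0 I Ib \<Longrightarrow> P (\<lambda>k. v k + w k) \<le> P v + P w"
    and P2: "\<And>v c. v \<in> XD0 I Ib \<Longrightarrow> P (\<lambda>k. c * v k) \<le> \<bar>c\<bar> * P v"
    and W: "\<And>n. W n \<in> XD0 I Ib" and w: "w \<in> XD0 I Ib"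
    and PW: "(\<lambda>n. P (W n)) \<longlonglongrightarrow> 0" and lim: "\<And>i. i \<in> I - Ib \<Longrightarrow> (\<lambda>n. W n i) \<longlonglongrightarrow> w i"
  shows "P w \<le> 0"
proof (rule LIMSEQ_le_const)
  let ?a = "\<lambda>n. P (W n) + (\<Sum>i\<in>I - Ib. \<bar>w i - W n i\<bar> * P (kronecker i))"
  have "(\<lambda>n. \<Sum>i\<in>I - Ib. \<bar>w i - W n i\<bar> * P (kronecker i)) \<longlonglongrightarrow> (\<Sum>i\<in>I - Ib. \<bar>w i - w i\<bar> * P (kronecker i))"
    by (intro tendsto_sum tendsto_mult tendsto_rabs tendsto_diff tendsto_const lim)
  then show "?a \<longlonglongrightarrow> 0" using tendsto_add[OF PW] by fastforce
  show "\<exists>N. \<forall>n\<ge>N. P w \<le> ?a n"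
  proof (intro exI allI impI)
    fix n
    have d: "(\<lambda>k. w k - W n k) \<in> XD0 I Ib" using w W[of n] by (auto simp: XD0_iff)
    have "P w = P (\<lambda>k. W n k + (w k - W n k))" by simp
    also have "\<dots> \<le> P (W n) + P (\<lambda>k. w k - W n k)" by (rule P1[OF W d])
    also have "P (\<lambda>k. w k - W n k) \<le> (\<Sum>i\<in>I - Ib. \<bar>w i - W n i\<bar> * P (kronecker i))"
      by (rule subadditive_le_sum_kronecker[OF fin P1 P2 d])
    finally show "P w \<le> ?a n" by simp
  qed
qed

lemma normalised_seq_if_not_l1_le_norm:
  assumes N2: "\<And>v c. v \<in> XD0 I Ib \<Longrightarrow> N (\<lambda>k. c * v k) \<le> \<bar>c\<bar> * N v"
    and N0: "\<And>v. v \<in> XD0 I Ib \<Longrightarrow> 0 \<le> N v"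
    and not_dominated: "\<not> (\<exists>c. \<forall>v\<in>XD0 I Ib. (\<Sum>i\<in>I - Ib. \<bar>v i\<bar>) \<le> c * N v)"
  obtains W where "\<And>n. W n \<in> XD0 I Ib" "\<And>n. (\<Sum>i\<in>I - Ib. \<bar>W n i\<bar>) = 1"
    "\<And>n. N (W n) \<le> 1 / real (Suc n)"
proof -
  let ?s = "\<lambda>v. \<Sum>i\<in>I - Ib. \<bar>v i\<bar>"
  have "\<forall>n::nat. \<exists>v\<in>XD0 I Ib. ?s v > real (Suc n) * N v" using not_dominated by (auto simp: not_le)
  then obtain V where V: "\<And>n. V n \<in> XD0 I Ib" "\<And>n. ?s (V n) > real (Suc n) * N (V n)" by metis
  have sp: "?s (V n) > 0" for n using V(2)[of n] N0[OF V(1)[of n]]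
    by (smt (verit) mult_nonneg_nonneg of_nat_0_le_iff)
  define W where "W n = (\<lambda>k. (1 / ?s (V n)) * V n k)" for n
  show ?thesis
  proof
    show "W n \<in> XD0 I Ib" for n using V(1)[of n] by (auto simp: W_def XD0_iff)
    show "?s (W n) = 1" for n
      using sp[of n] by (simp add: W_def abs_mult sum_divide_distrib[symmetric])
    show "N (W n) \<le> 1 / real (Suc n)" for n
    proof -
      have "N (W n) \<le> \<bar>1 / ?s (V n)\<bar> * N (V n)" unfolding W_def by (rule N2[OF V(1)])
      also have "\<dots> \<le> 1 / real (Suc n)" using V(2)[of n] sp[of n] by (simp add: field_simps)
      finally show ?thesis .
    qed
  qed
qed

text \<open>Equivalence of norms on the finite-dimensional space: if the \<open>\<ell>\<^sup>1\<close> norm were not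
  dominated by N, normalised counterexamples would have a limit of \<open>\<ell>\<^sup>1\<close> norm 1 and
  vanishing N.\<close>
lemma finite_dim_l1_le_norm:
  assumes fin: "finite I"
    and N1: "\<And>v w. v \<in> XD0 I Ib \<Longrightarrow> w \<in> XD0 I Ib \<Longrightarrow> N (\<lambda>k. v k + w k) \<le> N v + N w"
    and N2: "\<And>v c. v \<in> XD0 I Ib \<Longrightarrow> N (\<lambda>k. c * v k) \<le> \<bar>c\<bar> * N v"
    and N0: "\<And>v. v \<in> XD0 I Ib \<Longrightarrow> 0 \<le> N v"
    and Nd: "\<And>v. v \<in> XD0 I Ib \<Longrightarrow> N v = 0 \<Longrightarrow> v = (\<lambda>k. 0)"
  shows "\<exists>c. \<forall>v\<in>XD0 I Ib. (\<Sum>i\<in>I - Ib. \<bar>v i\<bar>) \<le> c * N v"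
proof (rule ccontr)
  let ?J = "I - Ib" and ?X = "XD0 I Ib"
  let ?s = "\<lambda>v. \<Sum>i\<in>?J. \<bar>v i\<bar>"
  have finJ: "finite ?J" using fin by simp
  assume "\<not> ?thesis"
  then obtain W where WX: "\<And>n. W n \<in> ?X" and sW: "\<And>n. ?s (W n) = 1"
    and NW: "\<And>n. N (W n) \<le> 1 / real (Suc n)"
    using normalised_seq_if_not_l1_le_norm[where N=N and I=I and Ib=Ib, OF N2 N0] by blast
  have "\<bar>W n i\<bar> \<le> 1" for n i
  proof (cases "i \<in> ?J")
    case True
    have "\<bar>W n i\<bar> \<le> ?s (W n)" by (rule member_le_sum[OF True _ finJ]) auto
    then show ?thesis using sW by simp
  next
    case False then show ?thesis using WX[of n] by (simp add: XD0_iff)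
  qed
  then obtain r l where r: "strict_mono r" "\<forall>i\<in>?J. (\<lambda>n. W (r n) i) \<longlonglongrightarrow> l i"
    using bounded_seq_convergent_subseq_finite[OF finJ, of W 1] by blast
  define w where "w = (\<lambda>k. if k \<in> ?J then l k else 0)"
  have wX: "w \<in> ?X" by (simp add: XD0_iff w_def)
  have "(\<lambda>n. ?s (W (r n))) \<longlonglongrightarrow> ?s w"
    by (intro tendsto_sum tendsto_rabs) (use r(2) in \<open>auto simp: w_def\<close>)
  then have sw: "?s w = 1" using sW by (simp add: LIMSEQ_const_iff)
  have NWr: "(\<lambda>n. N (W (r n))) \<longlonglongrightarrow> 0"
  proof (rule tendsto_sandwich[of "\<lambda>_. 0" _ _ "\<lambda>n. 1 / real (Suc (r n))"])
    have "(\<lambda>n. 1 / real (Suc n)) \<longlonglongrightarrow> 0" using LIMSEQ_Suc[OF lim_const_over_n[of 1]] by simp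
    from LIMSEQ_subseq_LIMSEQ[OF this r(1)] show "(\<lambda>n. 1 / real (Suc (r n))) \<longlonglongrightarrow> 0"
      by (simp add: o_def)
  qed (use N0[OF WX] NW in auto)
  have WrX: "W (r n) \<in> ?X" for n by (rule WX)
  have "(\<lambda>n. W (r n) i) \<longlonglongrightarrow> w i" if "i \<in> ?J" for i
    using r(2) that by (simp add: w_def)
  then have "N w \<le> 0"
    using subadditive_le_0_at_coordinate_limit[where P=N and W="\<lambda>n. W (r n)", OF fin N1 N2 WrX wX NWr]
    by blast
  then have "w = (\<lambda>k. 0)" using Nd[OF wX] N0[OF wX] by simp
  then show False using sw by simp
qed

section \<open>Uniformly elliptic coefficients\<close>

lemma borel_measurable_mult_matrix_vector:
  fixes \<Lambda> :: "real^'n \<Rightarrow> real^'n^'n" and G :: "real^'n \<Rightarrow> real^'n"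
  assumes "\<Lambda> \<in> borel_measurable M" "G \<in> borel_measurable M"
  shows "(\<lambda>x. \<Lambda> x *v G x) \<in> borel_measurable M"
proof (rule borel_measurable_continuous_Pair[OF assms, of "\<lambda>A v. A *v v"])
  show "continuous_on UNIV (\<lambda>p::(real^'n^'n) \<times> (real^'n). fst p *v snd p)"
    unfolding matrix_vector_mult_def by (intro continuous_intros continuous_on_vec_lambda)
qed

locale elliptic_coefficient =
  fixes \<Omega> :: "(real^'n) set" and \<Lambda> :: "real^'n \<Rightarrow> real^'n^'n" and lo hi :: real
  assumes coeff_measurable: "\<Lambda> \<in> borel_measurable (lebesgue_on \<Omega>)" and lo_pos: "0 < lo" and lo_le_hi: "lo \<le> hi"
    and coeff_spectrum: "AE x in lebesgue_on \<Omega>. transpose (\<Lambda> x) = \<Lambda> x \<and> eigs_in (\<Lambda> x) lo hi"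
begin

lemma AE_coeff_bounds: "AE x in lebesgue_on \<Omega>. \<forall>v. lo * (norm v)^2 \<le> v \<bullet> (\<Lambda> x *v v) \<and> norm (\<Lambda> x *v v) \<le> hi * norm v"
  using coeff_spectrum by eventually_elim (use eigs_in_bounds lo_pos in blast)

lemma hi_pos: "0 < hi" using lo_pos lo_le_hi by simp

lemma L2v_coeff_mult:
  assumes G: "L2v \<Omega> G"
  shows "L2v \<Omega> (\<lambda>x. \<Lambda> x *v G x)" and "L2normv \<Omega> (\<lambda>x. \<Lambda> x *v G x) \<le> hi * L2normv \<Omega> G"
proof -
  have m: "(\<lambda>x. \<Lambda> x *v G x) \<in> borel_measurable (lebesgue_on \<Omega>)"
    using G coeff_measurable by (auto simp: L2v_def intro: borel_measurable_mult_matrix_vector)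
  have ae: "AE x in lebesgue_on \<Omega>. (norm (\<Lambda> x *v G x))^2 \<le> hi^2 * (norm (G x))^2"
    using AE_coeff_bounds
  proof eventually_elim
    case (elim x)
    then have "norm (\<Lambda> x *v G x) \<le> hi * norm (G x)" by blast
    then have "(norm (\<Lambda> x *v G x))^2 \<le> (hi * norm (G x))^2" by (rule power_mono) simp
    then show ?case by (simp add: power_mult_distrib)
  qed
  have iG: "integrable (lebesgue_on \<Omega>) (\<lambda>x. hi^2 * (norm (G x))^2)" using G by (simp add: L2v_def)
  have iL: "integrable (lebesgue_on \<Omega>) (\<lambda>x. (norm (\<Lambda> x *v G x))^2)"
    by (rule Bochner_Integration.integrable_bound[OF iG]) (use m ae in \<open>auto elim!: eventually_mono\<close>)
  show "L2v \<Omega> (\<lambda>x. \<Lambda> x *v G x)" using m iL by (simp add: L2v_def)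
  have "intO \<Omega> (\<lambda>x. (norm (\<Lambda> x *v G x))^2) \<le> intO \<Omega> (\<lambda>x. hi^2 * (norm (G x))^2)"
    by (rule integral_mono_AE[OF iL iG ae])
  also have "\<dots> = (hi * L2normv \<Omega> G)^2" by (simp add: L2normv_sq power_mult_distrib)
  finally have "(L2normv \<Omega> (\<lambda>x. \<Lambda> x *v G x))^2 \<le> (hi * L2normv \<Omega> G)^2" by (simp add: L2normv_sq)
  then show "L2normv \<Omega> (\<lambda>x. \<Lambda> x *v G x) \<le> hi * L2normv \<Omega> G"
    using hi_pos L2normv_nonneg by (meson mult_nonneg_nonneg less_imp_le power2_le_imp_le)
qed

lemma coeff_coercive:
  assumes G: "L2v \<Omega> G"
  shows "lo * (L2normv \<Omega> G)^2 \<le> intO \<Omega> (\<lambda>x. (\<Lambda> x *v G x) \<bullet> G x)"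
proof -
  have i1: "integrable (lebesgue_on \<Omega>) (\<lambda>x. lo * (norm (G x))^2)" using G by (simp add: L2v_def)
  have i2: "integrable (lebesgue_on \<Omega>) (\<lambda>x. (\<Lambda> x *v G x) \<bullet> G x)"
    by (rule L2v_inner(1)[OF L2v_coeff_mult(1)[OF G] G])
  have "intO \<Omega> (\<lambda>x. lo * (norm (G x))^2) \<le> intO \<Omega> (\<lambda>x. (\<Lambda> x *v G x) \<bullet> G x)"
    by (rule integral_mono_AE[OF i1 i2]) (use AE_coeff_bounds in \<open>eventually_elim, auto simp: inner_commute\<close>)
  then show ?thesis by (simp add: L2normv_sq)
qed

lemma coeff_inner_bound:
  assumes G: "L2v \<Omega> G" and H: "L2v \<Omega> H"
  shows "integrable (lebesgue_on \<Omega>) (\<lambda>x. (\<Lambda> x *v G x) \<bullet> H x)"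
    and "\<bar>intO \<Omega> (\<lambda>x. (\<Lambda> x *v G x) \<bullet> H x)\<bar> \<le> hi * L2normv \<Omega> G * L2normv \<Omega> H"
proof -
  note l = L2v_coeff_mult[OF G]
  show "integrable (lebesgue_on \<Omega>) (\<lambda>x. (\<Lambda> x *v G x) \<bullet> H x)" by (rule L2v_inner(1)[OF l(1) H])
  have "\<bar>intO \<Omega> (\<lambda>x. (\<Lambda> x *v G x) \<bullet> H x)\<bar> \<le> L2normv \<Omega> (\<lambda>x. \<Lambda> x *v G x) * L2normv \<Omega> H"
    by (rule L2v_inner(2)[OF l(1) H])
  also have "\<dots> \<le> hi * L2normv \<Omega> G * L2normv \<Omega> H"
    by (rule mult_right_mono[OF l(2) L2normv_nonneg])
  finally show "\<bar>intO \<Omega> (\<lambda>x. (\<Lambda> x *v G x) \<bullet> H x)\<bar> \<le> hi * L2normv \<Omega> G * L2normv \<Omega> H" .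
qed

end

section \<open>Mass-lumped gradient discretisations\<close>

locale mass_lumped_gd =
  fixes \<Omega> :: "(real^'n) set" and I Ib :: "nat set" and U :: "nat \<Rightarrow> (real^'n) set"
    and PiS :: "(nat \<Rightarrow> real) \<Rightarrow> real^'n \<Rightarrow> real" and gD :: "(nat \<Rightarrow> real) \<Rightarrow> real^'n \<Rightarrow> real^'n"
    and Q :: "(real^'n \<Rightarrow> real) \<Rightarrow> (real^'n \<Rightarrow> real)"
  assumes finite_domain: "finite_measure (lebesgue_on \<Omega>)" and domain_sets: "\<Omega> \<in> sets lebesgue"
    and mass_lumped: "mass_lumped_GD \<Omega> I Ib U PiS gD Q"
begin

abbreviation "X \<equiv> XD0 I Ib"
abbreviation "PD \<equiv> PiPC I U"
abbreviation "N v \<equiv> L2normv \<Omega> (gD v)"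

lemma finite_I: "finite I" using mass_lumped by (simp add: mass_lumped_GD_def)
lemma U_sets: "i \<in> I \<Longrightarrow> U i \<in> sets lebesgue" using mass_lumped by (simp add: mass_lumped_GD_def)
lemma U_disjoint: "i \<in> I \<Longrightarrow> j \<in> I \<Longrightarrow> i \<noteq> j \<Longrightarrow> U i \<inter> U j = {}" using mass_lumped by (simp add: mass_lumped_GD_def)
lemma U_cover: "(\<Union>i\<in>I. U i) = \<Omega>" using mass_lumped by (simp add: mass_lumped_GD_def)
lemma gD_lin: "v \<in> X \<Longrightarrow> w \<in> X \<Longrightarrow> AE x in lebesgue_on \<Omega>. gD (\<lambda>i. a * v i + b * w i) x = a *\<^sub>R gD v x + b *\<^sub>R gD w x"
  using mass_lumped by (simp add: mass_lumped_GD_def lin_on_X_vec_def)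
lemma gD_L2: "v \<in> X \<Longrightarrow> L2v \<Omega> (gD v)" using mass_lumped by (simp add: mass_lumped_GD_def)
lemma gD_norm_eq_0: "v \<in> X \<Longrightarrow> N v = 0 \<Longrightarrow> v = (\<lambda>i. 0)" using mass_lumped by (simp add: mass_lumped_GD_def)
lemma PiS_lin: "v \<in> X \<Longrightarrow> w \<in> X \<Longrightarrow> AE x in lebesgue_on \<Omega>. PiS (\<lambda>i. a * v i + b * w i) x = a * PiS v x + b * PiS w x"
  using mass_lumped by (simp add: mass_lumped_GD_def lin_on_X_scalar_def)
lemma PiS_L2: "v \<in> X \<Longrightarrow> L2 \<Omega> (PiS v)" using mass_lumped by (simp add: mass_lumped_GD_def)
lemma Q_L2: "L2 \<Omega> h \<Longrightarrow> L2 \<Omega> (Q h)" using mass_lumped by (simp add: mass_lumped_GD_def)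

lemma PD_lin: "PD (\<lambda>i. a * v i + b * w i) x = a * PD v x + b * PD w x"
  by (simp add: PiPC_def sum.distrib sum_distrib_left algebra_simps)

lemma PD_measurable: "PD v \<in> borel_measurable (lebesgue_on \<Omega>)"
proof -
  have "(\<lambda>x. v i * indicator (U i) x) \<in> borel_measurable (lebesgue_on \<Omega>)" if "i \<in> I" for i
    by (intro borel_measurable_times borel_measurable_const borel_measurable_indicator')
       (use domain_sets U_sets[OF that] in \<open>auto simp: sets_restrict_space_iff\<close>)
  then show ?thesis unfolding PiPC_def[abs_def] by (intro borel_measurable_sum) auto
qed

lemma PD_abs_le_sum: "\<bar>PD v x\<bar> \<le> (\<Sum>i\<in>I. \<bar>v i\<bar>)"
  unfolding PiPC_def
  by (rule order_trans[OF sum_abs sum_mono]) (auto simp: abs_mult indicator_def)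

lemma PD_L2: "L2 \<Omega> (PD v)"
  by (rule L2_bounded[OF finite_domain PD_measurable PD_abs_le_sum])

lemma PD_at_point: assumes "x \<in> \<Omega>" shows "\<exists>i0\<in>I. \<forall>w. PD w x = w i0"
proof -
  obtain i0 where i0: "i0 \<in> I" "x \<in> U i0" using U_cover assms by auto
  have "PD w x = w i0" for w
  proof -
    have "PD w x = (\<Sum>i\<in>I. if i = i0 then w i else 0)"
      unfolding PiPC_def
      by (rule sum.cong) (use i0 U_disjoint in \<open>auto simp: indicator_def\<close>)
    then show ?thesis using i0 finite_I by simp
  qed
  then show ?thesis using i0 by blast
qed

lemma PD_comp: "x \<in> \<Omega> \<Longrightarrow> PD (\<lambda>i. h (v i)) x = h (PD v x)"
  using PD_at_point by metis

lemma X_add: "v \<in> X \<Longrightarrow> w \<in> X \<Longrightarrow> (\<lambda>k. v k + w k) \<in> X" using XD0_lin[where a=1 and b=1] by simp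
lemma X_scale: "v \<in> X \<Longrightarrow> (\<lambda>k. c * v k) \<in> X" using XD0_lin[where a=c and b=0 and w=v] by simp
lemma X_diff: "v \<in> X \<Longrightarrow> w \<in> X \<Longrightarrow> (\<lambda>k. v k - w k) \<in> X" using XD0_lin[where a=1 and b="-1"] by simp

lemma gD_add: "v \<in> X \<Longrightarrow> w \<in> X \<Longrightarrow> AE x in lebesgue_on \<Omega>. gD (\<lambda>i. v i + w i) x = gD v x + gD w x"
  using gD_lin[of v w 1 1] by simp
lemma gD_scale: "v \<in> X \<Longrightarrow> AE x in lebesgue_on \<Omega>. gD (\<lambda>i. c * v i) x = c *\<^sub>R gD v x"
  using gD_lin[of v v c 0] by simp
lemma gD_diff: "v \<in> X \<Longrightarrow> w \<in> X \<Longrightarrow> AE x in lebesgue_on \<Omega>. gD (\<lambda>i. v i - w i) x = gD v x - gD w x"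
  using gD_lin[of v w 1 "-1"] by simp
lemma PiS_add: "v \<in> X \<Longrightarrow> w \<in> X \<Longrightarrow> AE x in lebesgue_on \<Omega>. PiS (\<lambda>i. v i + w i) x = PiS v x + PiS w x"
  using PiS_lin[of v w 1 1] by simp
lemma PiS_scale: "v \<in> X \<Longrightarrow> AE x in lebesgue_on \<Omega>. PiS (\<lambda>i. c * v i) x = c * PiS v x"
  using PiS_lin[of v v c 0] by simp
lemma gD_meas: "v \<in> X \<Longrightarrow> gD v \<in> borel_measurable (lebesgue_on \<Omega>)"
  using gD_L2 by (simp add: L2v_def)

lemma N_add_le: "v \<in> X \<Longrightarrow> w \<in> X \<Longrightarrow> N (\<lambda>k. v k + w k) \<le> N v + N w"
proof -
  assume v: "v \<in> X" and w: "w \<in> X"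
  have "N (\<lambda>k. v k + w k) = L2normv \<Omega> (\<lambda>x. gD v x + gD w x)"
    by (rule L2normv_cong_AE) (use gD_meas[OF X_add[OF v w]] gD_meas[OF v] gD_meas[OF w] gD_add[OF v w] in auto)
  also have "\<dots> \<le> N v + N w" by (rule L2normv_triangle[OF gD_L2[OF v] gD_L2[OF w]])
  finally show ?thesis .
qed

lemma N_scale: "v \<in> X \<Longrightarrow> N (\<lambda>k. c * v k) = \<bar>c\<bar> * N v"
proof -
  assume v: "v \<in> X"
  have "N (\<lambda>k. c * v k) = L2normv \<Omega> (\<lambda>x. c *\<^sub>R gD v x)"
    by (rule L2normv_cong_AE) (use gD_meas[OF X_scale[OF v]] gD_meas[OF v] gD_scale[OF v] in auto)
  then show ?thesis by (simp add: L2normv_scale)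
qed

lemma N_scale_le: "v \<in> X \<Longrightarrow> N (\<lambda>k. c * v k) \<le> \<bar>c\<bar> * N v" using N_scale by simp

lemma N_pos: assumes v: "v \<in> X" and nz: "v \<noteq> (\<lambda>i. 0)" shows "0 < N v"
proof -
  have "N v \<noteq> 0" using gD_norm_eq_0[OF v] nz by blast
  then show ?thesis using L2normv_nonneg[of \<Omega> "gD v"] by linarith
qed

lemma l1_le_N: "\<exists>c\<ge>0. \<forall>v\<in>X. (\<Sum>i\<in>I - Ib. \<bar>v i\<bar>) \<le> c * N v"
proof -
  have "\<exists>c. \<forall>v\<in>X. (\<Sum>i\<in>I - Ib. \<bar>v i\<bar>) \<le> c * N v"
    by (rule finite_dim_l1_le_norm[where N="\<lambda>v. L2normv \<Omega> (gD v)", OF finite_I N_add_le N_scale_le L2normv_nonneg gD_norm_eq_0])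
  then obtain c where c: "\<forall>v\<in>X. (\<Sum>i\<in>I - Ib. \<bar>v i\<bar>) \<le> c * N v" by blast
  have "(\<Sum>i\<in>I - Ib. \<bar>v i\<bar>) \<le> max c 0 * N v" if "v \<in> X" for v
  proof -
    have "(\<Sum>i\<in>I - Ib. \<bar>v i\<bar>) \<le> c * N v" using c that by blast
    also have "\<dots> \<le> max c 0 * N v" by (rule mult_right_mono[OF max.cobounded1 L2normv_nonneg])
    finally show ?thesis .
  qed
  then show ?thesis by (intro exI[of _ "max c 0"]) auto
qed

lemma seminorm_le_N:
  fixes P :: "(nat \<Rightarrow> real) \<Rightarrow> real"
  assumes P1: "\<And>v w. v \<in> X \<Longrightarrow> w \<in> X \<Longrightarrow> P (\<lambda>k. v k + w k) \<le> P v + P w"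
    and P2: "\<And>v c. v \<in> X \<Longrightarrow> P (\<lambda>k. c * v k) \<le> \<bar>c\<bar> * P v"
    and P0: "\<And>v. v \<in> X \<Longrightarrow> 0 \<le> P v"
  shows "\<exists>K\<ge>0. \<forall>v\<in>X. P v \<le> K * N v"
proof -
  obtain c where c: "c \<ge> 0" "\<forall>v\<in>X. (\<Sum>i\<in>I - Ib. \<bar>v i\<bar>) \<le> c * N v" using l1_le_N by blast
  define Kp where "Kp = (\<Sum>i\<in>I - Ib. P (kronecker i))"
  have Pd: "i \<in> I - Ib \<Longrightarrow> 0 \<le> P (kronecker i)" for i using P0 XD0_kronecker by blast
  have Kp: "0 \<le> Kp" unfolding Kp_def by (rule sum_nonneg) (use Pd in auto)
  have "P v \<le> (Kp * c) * N v" if v: "v \<in> X" for v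
  proof -
    have "P v \<le> (\<Sum>i\<in>I - Ib. \<bar>v i\<bar> * P (kronecker i))" by (rule subadditive_le_sum_kronecker[OF finite_I P1 P2 v])
    also have "\<dots> \<le> (\<Sum>i\<in>I - Ib. (\<Sum>j\<in>I - Ib. \<bar>v j\<bar>) * P (kronecker i))"
    proof (rule sum_mono)
      fix i assume i: "i \<in> I - Ib"
      have "\<bar>v i\<bar> \<le> (\<Sum>j\<in>I - Ib. \<bar>v j\<bar>)" by (rule member_le_sum[OF i]) (use finite_I in auto)
      then show "\<bar>v i\<bar> * P (kronecker i) \<le> (\<Sum>j\<in>I - Ib. \<bar>v j\<bar>) * P (kronecker i)" using Pd[OF i] by (rule mult_right_mono)
    qed
    also have "\<dots> = (\<Sum>j\<in>I - Ib. \<bar>v j\<bar>) * Kp" unfolding Kp_def by (simp add: sum_distrib_left)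
    also have "\<dots> \<le> (c * N v) * Kp" using c(2) v Kp by (simp add: mult_right_mono)
    finally show ?thesis by (simp add: algebra_simps)
  qed
  then show ?thesis using Kp c by (intro exI[of _ "Kp * c"]) auto
qed

lemma sup_quotient_bound:
  fixes P :: "(nat \<Rightarrow> real) \<Rightarrow> real"
  assumes P1: "\<And>v w. v \<in> X \<Longrightarrow> w \<in> X \<Longrightarrow> P (\<lambda>k. v k + w k) \<le> P v + P w"
    and P2: "\<And>v c. v \<in> X \<Longrightarrow> P (\<lambda>k. c * v k) \<le> \<bar>c\<bar> * P v"
    and P0: "\<And>v. v \<in> X \<Longrightarrow> 0 \<le> P v"
  defines "S \<equiv> Sup (insert 0 {P v / N v | v. v \<in> X \<and> v \<noteq> (\<lambda>i. 0)})"
  shows "0 \<le> S" and "\<And>v. v \<in> X \<Longrightarrow> P v \<le> S * N v"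
proof -
  obtain K where K: "K \<ge> 0" "\<forall>v\<in>X. P v \<le> K * N v" using seminorm_le_N[of P, OF P1 P2 P0] by blast
  have bdd: "bdd_above (insert 0 {P v / N v | v. v \<in> X \<and> v \<noteq> (\<lambda>i. 0)})"
  proof (rule bdd_aboveI[of _ K])
    fix y assume "y \<in> insert 0 {P v / N v | v. v \<in> X \<and> v \<noteq> (\<lambda>i. 0)}"
    then show "y \<le> K"
    proof
      assume "y = 0" then show ?thesis using K by simp
    next
      assume "y \<in> {P v / N v | v. v \<in> X \<and> v \<noteq> (\<lambda>i. 0)}"
      then obtain v where v: "v \<in> X" "v \<noteq> (\<lambda>i. 0)" "y = P v / N v" by blast
      then show ?thesis using K N_pos[OF v(1,2)] by (simp add: divide_le_eq)
    qed
  qed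
  show S0: "0 \<le> S" unfolding S_def by (rule cSup_upper[OF _ bdd]) simp
  fix v assume v: "v \<in> X"
  show "P v \<le> S * N v"
  proof (cases "v = (\<lambda>i. 0)")
    case True
    have "P v = P (\<lambda>k. 0 * v k)" using True by simp
    also have "\<dots> \<le> 0" using P2[OF v, of 0] by simp
    finally show ?thesis using S0 L2normv_nonneg[of \<Omega> "gD v"] by (smt (verit) mult_nonneg_nonneg)
  next
    case False
    have "P v / N v \<le> S" unfolding S_def by (rule cSup_upper[OF _ bdd]) (use v False in blast)
    then show ?thesis using N_pos[OF v False] by (simp add: divide_le_eq)
  qed
qed

end

section \<open>The error estimate\<close>

lemma le_of_quadratic_ineq:
  fixes E lo A b :: real
  assumes lo: "0 < lo" and A0: "0 \<le> A" and b0: "0 \<le> b"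
    and q: "lo * E^2 \<le> A * E + b"
  shows "E \<le> A / lo + sqrt (b / lo)"
proof (rule ccontr)
  define a where "a = A / lo"
  define r where "r = sqrt (b / lo)"
  assume "\<not> ?thesis"
  moreover have "0 \<le> a" using A0 lo by (simp add: a_def)
  ultimately have gt: "r < E" "r < E - a" by (auto simp: a_def r_def)
  have "lo * (E * (E - a)) = lo * E^2 - A * E"
    using lo by (simp add: a_def power2_eq_square field_simps)
  then have le: "E * (E - a) \<le> b / lo" using q lo by (simp add: field_simps mult.commute)
  have "r * r < E * (E - a)" using mult_strict_mono[OF gt] gt b0 lo by (simp add: r_def)
  moreover have "r * r = b / lo" using b0 lo by (simp add: r_def)
  ultimately show False using le by simp
qed

lemma mono_diff_mult_nonneg:
  fixes \<beta> \<zeta> :: "real \<Rightarrow> real"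
  assumes "mono \<beta>" "mono \<zeta>"
  shows "0 \<le> (\<beta> s - \<beta> t) * (\<zeta> s - \<zeta> t)"
proof (cases "t \<le> s")
  case True
  then show ?thesis using assms by (simp add: mono_def)
next
  case False
  then have "\<beta> s \<le> \<beta> t" "\<zeta> s \<le> \<zeta> t" using assms by (auto simp: mono_def)
  then show ?thesis by (simp add: mult_nonpos_nonpos)
qed

locale monotone_problem = elliptic_coefficient \<Omega> \<Lambda> lo hi
  for \<Omega> :: "(real^'n) set" and \<Lambda> lo hi +
  fixes \<zeta> \<beta> :: "real \<Rightarrow> real" and f :: "real^'n \<Rightarrow> real" and F :: "real^'n \<Rightarrow> real^'n"
    and ub :: "real^'n \<Rightarrow> real" and Gz :: "real^'n \<Rightarrow> real^'n" and M0 M1 K0 K1 :: real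
  assumes open_domain: "open \<Omega>" and bounded_domain: "bounded \<Omega>"
    and zeta_mono: "mono \<zeta>" and zeta_0: "\<zeta> 0 = 0"
    and M0_pos: "M0 > 0" and zeta_growth: "\<And>s. \<bar>\<zeta> s\<bar> \<ge> M0 * \<bar>s\<bar> - M1"
    and beta_cont: "continuous_on UNIV \<beta>" and beta_mono: "mono \<beta>" and beta_0: "\<beta> 0 = 0"
    and beta_growth: "\<And>s. \<bar>\<beta> s\<bar> \<le> K0 * \<bar>s\<bar> + K1"
    and f_L2: "L2 \<Omega> f" and F_L2v: "L2v \<Omega> F"
    and weak_solution: "weak_sol \<Omega> \<zeta> \<beta> \<Lambda> f F ub Gz"
begin

lemma domain_sets: "\<Omega> \<in> sets lebesgue"
  using open_domain by (auto intro: borel_open)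

lemma finite_domain: "finite_measure (lebesgue_on \<Omega>)"
  by (intro finite_measure_lebesgue_on bounded_set_imp_lmeasurable bounded_domain domain_sets)

lemma ub_L2: "L2 \<Omega> ub" and zeta_ub_L2: "L2 \<Omega> (\<lambda>x. \<zeta> (ub x))" and Gz_L2v: "L2v \<Omega> Gz"
  using weak_solution by (simp_all add: weak_sol_def H10_def)

lemma weak_equation: "H10 \<Omega> v Gv \<Longrightarrow> intO \<Omega> (\<lambda>x. \<beta> (ub x) * v x) + intO \<Omega> (\<lambda>x. (\<Lambda> x *v Gz x) \<bullet> Gv x)
    = intO \<Omega> (\<lambda>x. f x * v x) - intO \<Omega> (\<lambda>x. F x \<bullet> Gv x)"
  using weak_solution by (simp add: weak_sol_def)

lemma beta_ub_L2: "L2 \<Omega> (\<lambda>x. \<beta> (ub x))"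
  by (rule L2_comp_affine_growth[OF finite_domain ub_L2 beta_cont beta_growth])

lemma coeff_Gz_L2v: "L2v \<Omega> (\<lambda>x. \<Lambda> x *v Gz x)"
  by (rule L2v_coeff_mult(1)[OF Gz_L2v])

lemma div_flux_eq:
  assumes div: "weak_div \<Omega> (\<lambda>x. \<Lambda> x *v Gz x + F x) divpsi"
  shows "AE x in lebesgue_on \<Omega>. divpsi x = \<beta> (ub x) - f x"
proof -
  let ?g = "\<lambda>x. divpsi x - \<beta> (ub x) + f x"
  have divL: "L2 \<Omega> divpsi" using div by (simp add: weak_div_def)
  have "AE x in lebesgue_on \<Omega>. ?g x = 0"
  proof (rule fundamental_lemma_calculus_of_variations[OF open_domain])
    show "integrable (lebesgue_on \<Omega>) ?g"
      by (intro L2_integrable[OF finite_domain] L2_add L2_diff divL beta_ub_L2 f_L2)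
    fix \<phi> assume t: "test_fun \<Omega> \<phi>"
    have H: "H10 \<Omega> \<phi> (grad \<phi>)" by (rule test_fun_H10[OF domain_sets finite_domain t])
    have pL: "L2 \<Omega> \<phi>" and gpL: "L2v \<Omega> (grad \<phi>)" using H by (auto simp: H10_def)
    have "intO \<Omega> (\<lambda>x. (\<Lambda> x *v Gz x + F x) \<bullet> grad \<phi> x) = - intO \<Omega> (\<lambda>x. divpsi x * \<phi> x)"
      using div t by (simp add: weak_div_def)
    moreover have "intO \<Omega> (\<lambda>x. (\<Lambda> x *v Gz x + F x) \<bullet> grad \<phi> x)
        = intO \<Omega> (\<lambda>x. (\<Lambda> x *v Gz x) \<bullet> grad \<phi> x) + intO \<Omega> (\<lambda>x. F x \<bullet> grad \<phi> x)"
      using L2v_inner(1)[OF coeff_Gz_L2v gpL] L2v_inner(1)[OF F_L2v gpL] by (simp add: inner_add_left)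
    moreover have "(\<lambda>x. ?g x * \<phi> x) = (\<lambda>x. divpsi x * \<phi> x - \<beta> (ub x) * \<phi> x + f x * \<phi> x)"
      by (auto simp: algebra_simps)
    ultimately show "intO \<Omega> (\<lambda>x. ?g x * \<phi> x) = 0"
      using weak_equation[OF H] L2_prod(1)[OF divL pL] L2_prod(1)[OF beta_ub_L2 pL] L2_prod(1)[OF f_L2 pL]
      by simp
  qed
  then show ?thesis by eventually_elim simp
qed

lemma beta_sq_le_zeta_sq:
  "(\<beta> s)^2 \<le> 4 * K0^2 / M0^2 * (\<zeta> s)^2 + (4 * K0^2 * M1^2 / M0^2 + 2 * K1^2)"
proof -
  have b1: "(\<beta> s)^2 \<le> 2 * K0^2 * s^2 + 2 * K1^2" by (rule power2_le_if_abs_le_affine[OF beta_growth[of s]])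
  have "(M0 * \<bar>s\<bar>)^2 \<le> (\<bar>\<zeta> s\<bar> + M1)^2"
    using zeta_growth[of s] M0_pos by (intro power_mono) auto
  also have "\<dots> \<le> 2 * (\<zeta> s)^2 + 2 * M1^2" using power2_add_le_2[of "\<bar>\<zeta> s\<bar>" M1] by simp
  finally have "s^2 \<le> (2 * (\<zeta> s)^2 + 2 * M1^2) / M0^2"
    using M0_pos by (simp add: power_mult_distrib field_simps)
  then have "2 * K0^2 * s^2 \<le> 2 * K0^2 * ((2 * (\<zeta> s)^2 + 2 * M1^2) / M0^2)"
    by (rule mult_left_mono) simp
  also have "\<dots> = 4 * K0^2 / M0^2 * (\<zeta> s)^2 + 4 * K0^2 * M1^2 / M0^2"
    by (simp add: divide_inverse algebra_simps)
  finally show ?thesis using b1 by simp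
qed

text \<open>A bound on the \<open>L\<^sup>2\<close> norm of \<open>\<beta>(PD u)\<close>, from the a priori estimate of the scheme and
  the growth conditions on \<beta> and \<zeta>. It replaces the bound on \<open>\<beta>(Q ub)\<close> allowed by the
  theorem, which the proof does not need.\<close>
definition beta_discrete_bound :: "real \<Rightarrow> real \<Rightarrow> real" where
  "beta_discrete_bound cD bQ = sqrt (4 * K0^2 / M0^2 * (cD * ((bQ * cD + L2normv \<Omega> F) / lo))^2
     + (4 * K0^2 * M1^2 / M0^2 + 2 * K1^2) * measure (lebesgue_on \<Omega>) \<Omega>)"

definition error_constant :: "real \<Rightarrow> real \<Rightarrow> real" where
  "error_constant cD bQ = (hi + 1 + L2norm \<Omega> (\<lambda>x. \<beta> (ub x) - f x) + cD) / lo
     + sqrt ((beta_discrete_bound cD bQ + L2norm \<Omega> (\<lambda>x. \<beta> (ub x))) / lo)"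

end

lemma monotone_problem_if_assumptions_A:
  assumes A: "assumptions_A \<Omega> \<zeta> \<beta> \<Lambda> lo hi f F" and W: "weak_sol \<Omega> \<zeta> \<beta> \<Lambda> f F ub Gz"
  obtains M0 M1 K0 K1 where "monotone_problem \<Omega> \<Lambda> lo hi \<zeta> \<beta> f F ub Gz M0 M1 K0 K1"
proof -
  obtain M0 M1 where M: "M0 > 0" "\<And>s. \<bar>\<zeta> s\<bar> \<ge> M0 * \<bar>s\<bar> - M1"
    using A by (auto simp: assumptions_A_def)
  obtain K0 K1 where K: "\<And>s. \<bar>\<beta> s\<bar> \<le> K0 * \<bar>s\<bar> + K1"
    using A by (auto simp: assumptions_A_def)
  have "monotone_problem \<Omega> \<Lambda> lo hi \<zeta> \<beta> f F ub Gz M0 M1 K0 K1"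
    using A W M K by unfold_locales (auto simp: assumptions_A_def)
  then show ?thesis by (rule that)
qed

text \<open>Here w is the interpolant \<open>I\<^sub>D \<zeta>(ub)\<close> and divpsi the divergence of the flux
  \<open>\<Lambda> Gz + F\<close>; the error is \<open>e = w - \<zeta>(u)\<close>.\<close>
locale mass_lumped_scheme = monotone_problem \<Omega> \<Lambda> lo hi \<zeta> \<beta> f F ub Gz M0 M1 K0 K1
  for \<Omega> :: "(real^'n) set" and \<Lambda> lo hi \<zeta> \<beta> f F ub Gz M0 M1 K0 K1 +
  fixes I Ib :: "nat set" and U :: "nat \<Rightarrow> (real^'n) set"
    and PiS :: "(nat \<Rightarrow> real) \<Rightarrow> real^'n \<Rightarrow> real" and gD :: "(nat \<Rightarrow> real) \<Rightarrow> real^'n \<Rightarrow> real^'n"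
    and Q :: "(real^'n \<Rightarrow> real) \<Rightarrow> (real^'n \<Rightarrow> real)"
    and u w :: "nat \<Rightarrow> real" and divpsi :: "real^'n \<Rightarrow> real" and cD bQ :: real
  assumes mass_lumped: "mass_lumped_GD \<Omega> I Ib U PiS gD Q"
    and scheme_solution: "GS_sol \<Omega> \<zeta> \<beta> \<Lambda> f F (XD0 I Ib) (PiPC I U) gD Q u"
    and CD_le: "CD \<Omega> (XD0 I Ib) (PiPC I U) gD \<le> cD"
    and Qf_le: "L2norm \<Omega> (Q f) \<le> bQ"
    and flux_div: "weak_div \<Omega> (\<lambda>x. \<Lambda> x *v Gz x + F x) divpsi"
    and w_in_X: "w \<in> XD0 I Ib"
    and w_minimises: "\<forall>v\<in>XD0 I Ib.
         L2normv \<Omega> (\<lambda>x. gD w x - Gz x) + L2norm \<Omega> (\<lambda>x. PiPC I U w x - \<zeta> (ub x))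
         \<le> L2normv \<Omega> (\<lambda>x. gD v x - Gz x) + L2norm \<Omega> (\<lambda>x. PiPC I U v x - \<zeta> (ub x))"

sublocale mass_lumped_scheme \<subseteq> mass_lumped_gd \<Omega> I Ib U PiS gD Q
  by (rule mass_lumped_gd.intro[OF finite_domain domain_sets mass_lumped])

context mass_lumped_scheme
begin

abbreviation "z \<equiv> (\<lambda>i. \<zeta> (u i))"
abbreviation "e \<equiv> (\<lambda>i. w i - z i)"
abbreviation "psi \<equiv> (\<lambda>x. \<Lambda> x *v Gz x + F x)"
abbreviation "flux_functional v \<equiv> intO \<Omega> (\<lambda>x. gD v x \<bullet> psi x + PiS v x * divpsi x)"
abbreviation "Sd \<equiv> SD \<Omega> X PD gD (\<lambda>x. \<zeta> (ub x)) Gz"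
abbreviation "Wd \<equiv> WD \<Omega> X PiS gD psi divpsi"
abbreviation "al \<equiv> alphaD \<Omega> X PD PiS gD"

lemma u_in_X: "u \<in> X" using scheme_solution by (simp add: GS_sol_def)
lemma z_in_X: "z \<in> X" using u_in_X zeta_0 by (auto simp: XD0_def)
lemma e_in_X: "e \<in> X" by (rule X_diff[OF w_in_X z_in_X])

lemma scheme_equation: "v \<in> X \<Longrightarrow> intO \<Omega> (\<lambda>x. \<beta> (PD u x) * PD v x) + intO \<Omega> (\<lambda>x. (\<Lambda> x *v gD z x) \<bullet> gD v x)
   = intO \<Omega> (\<lambda>x. Q f x * PD v x) - intO \<Omega> (\<lambda>x. F x \<bullet> gD v x)"
  using scheme_solution by (simp add: GS_sol_def)

lemma beta_PD_u_L2: "L2 \<Omega> (\<lambda>x. \<beta> (PD u x))"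
  by (rule L2_comp_affine_growth[OF finite_domain PD_L2 beta_cont beta_growth])

lemma PD_z: "x \<in> \<Omega> \<Longrightarrow> PD z x = \<zeta> (PD u x)" by (rule PD_comp)

lemma Qf_L2: "L2 \<Omega> (Q f)" by (rule Q_L2[OF f_L2])

lemma divpsi_L2: "L2 \<Omega> divpsi" using flux_div by (simp add: weak_div_def)

lemma cD_nonneg: "0 \<le> cD" and L2norm_PD_le: "v \<in> X \<Longrightarrow> L2norm \<Omega> (PD v) \<le> cD * N v"
proof -
  let ?P = "\<lambda>v. L2norm \<Omega> (PD v)"
  have P1: "?P (\<lambda>k. v k + w k) \<le> ?P v + ?P w" for v w
  proof -
    have "PD (\<lambda>k. v k + w k) = (\<lambda>x. PD v x + PD w x)" using PD_lin[of 1 v 1 w] by auto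
    then show ?thesis using L2norm_triangle[OF PD_L2 PD_L2] by simp
  qed
  have P2: "?P (\<lambda>k. c * v k) \<le> \<bar>c\<bar> * ?P v" for v c
  proof -
    have "PD (\<lambda>k. c * v k) = (\<lambda>x. c * PD v x)" using PD_lin[of c v 0 v] by auto
    then show ?thesis by (simp add: L2norm_scale)
  qed
  note sq = sup_quotient_bound[of ?P, OF P1 P2 L2norm_nonneg]
  show "0 \<le> cD" using sq(1) CD_le by (simp add: CD_def)
  fix v assume v: "v \<in> X"
  have "?P v \<le> CD \<Omega> X PD gD * N v" using sq(2)[OF v] by (simp add: CD_def)
  also have "\<dots> \<le> cD * N v" by (rule mult_right_mono[OF CD_le L2normv_nonneg])
  finally show "?P v \<le> cD * N v" .
qed

text \<open>The a priori estimate: test the scheme with \<open>\<zeta>(u)\<close>; the reaction term is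
  non-negative because \<beta> and \<zeta> are non-decreasing and vanish at 0.\<close>
lemma apriori_estimate: "N z \<le> (bQ * cD + L2normv \<Omega> F) / lo"
proof -
  let ?K = "bQ * cD + L2normv \<Omega> F"
  have bQ0: "0 \<le> bQ" using Qf_le L2norm_nonneg[of \<Omega> "Q f"] by linarith
  have gz: "L2v \<Omega> (gD z)" by (rule gD_L2[OF z_in_X])
  have "lo * (N z)^2 \<le> intO \<Omega> (\<lambda>x. (\<Lambda> x *v gD z x) \<bullet> gD z x)" by (rule coeff_coercive[OF gz])
  moreover have "0 \<le> intO \<Omega> (\<lambda>x. \<beta> (PD u x) * PD z x)"
    using mono_diff_mult_nonneg[OF beta_mono zeta_mono, where t=0]
    by (intro integral_nonneg_AE AE_I2) (simp add: PD_z beta_0 zeta_0)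
  moreover have "\<bar>intO \<Omega> (\<lambda>x. Q f x * PD z x)\<bar> \<le> bQ * (cD * N z)"
    using L2_prod(2)[OF Qf_L2 PD_L2, of z] mult_mono[OF Qf_le L2norm_PD_le[OF z_in_X] bQ0 L2norm_nonneg]
    by linarith
  moreover have "\<bar>intO \<Omega> (\<lambda>x. F x \<bullet> gD z x)\<bar> \<le> L2normv \<Omega> F * N z"
    by (rule L2v_inner(2)[OF F_L2v gz])
  ultimately have "lo * (N z)^2 \<le> ?K * N z"
    using scheme_equation[OF z_in_X] by (simp add: algebra_simps)
  then have "lo * N z \<le> ?K \<or> N z = 0"
    using L2normv_nonneg[of \<Omega> "gD z"] by (auto simp: power2_eq_square mult.assoc[symmetric] mult_le_cancel_right)
  then show ?thesis
    using lo_pos bQ0 cD_nonneg L2normv_nonneg[of \<Omega> F] by (auto simp: field_simps)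
qed

lemma L2norm_beta_PD_u_le: "L2norm \<Omega> (\<lambda>x. \<beta> (PD u x)) \<le> beta_discrete_bound cD bQ"
proof -
  interpret finite_measure "lebesgue_on \<Omega>" by (rule finite_domain)
  let ?a = "4 * K0^2 / M0^2" and ?b = "4 * K0^2 * M1^2 / M0^2 + 2 * K1^2"
  have i1: "integrable (lebesgue_on \<Omega>) (\<lambda>x. (\<beta> (PD u x))^2)" using beta_PD_u_L2 by (simp add: L2_def)
  have i2: "integrable (lebesgue_on \<Omega>) (\<lambda>x. ?a * (PD z x)^2 + ?b)" using PD_L2 by (simp add: L2_def)
  have "L2norm \<Omega> (PD z) \<le> cD * ((bQ * cD + L2normv \<Omega> F) / lo)"
    using L2norm_PD_le[OF z_in_X] mult_left_mono[OF apriori_estimate cD_nonneg] by linarith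
  then have "?a * (L2norm \<Omega> (PD z))^2 \<le> ?a * (cD * ((bQ * cD + L2normv \<Omega> F) / lo))^2"
    by (intro mult_left_mono power_mono L2norm_nonneg) simp_all
  moreover have "intO \<Omega> (\<lambda>x. (\<beta> (PD u x))^2) \<le> intO \<Omega> (\<lambda>x. ?a * (PD z x)^2 + ?b)"
    by (rule integral_mono[OF i1 i2]) (use beta_sq_le_zeta_sq in \<open>simp add: PD_z\<close>)
  moreover have "intO \<Omega> (\<lambda>x. ?a * (PD z x)^2 + ?b) = ?a * (L2norm \<Omega> (PD z))^2 + ?b * measure (lebesgue_on \<Omega>) \<Omega>"
    using PD_L2 by (simp add: L2_def L2norm_sq)
  ultimately show ?thesis
    unfolding L2norm_def beta_discrete_bound_def by (intro real_sqrt_le_mono) linarith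
qed

lemma SD_eq: "Sd = L2normv \<Omega> (\<lambda>x. gD w x - Gz x) + L2norm \<Omega> (\<lambda>x. PD w x - \<zeta> (ub x))"
  unfolding SD_def by (rule cInf_eq_minimum) (use w_in_X w_minimises in auto)

lemma SD_nonneg: "0 \<le> Sd"
  and SD_ge: "L2normv \<Omega> (\<lambda>x. gD w x - Gz x) \<le> Sd" "L2norm \<Omega> (\<lambda>x. PD w x - \<zeta> (ub x)) \<le> Sd"
  using SD_eq L2norm_nonneg[of \<Omega> "\<lambda>x. PD w x - \<zeta> (ub x)"] L2normv_nonneg[of \<Omega> "\<lambda>x. gD w x - Gz x"]
  by linarith+

lemma alphaD_bounds: "0 \<le> al" "v \<in> X \<Longrightarrow> L2norm \<Omega> (\<lambda>x. PD v x - PiS v x) \<le> al * N v"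
proof -
  let ?P = "\<lambda>v. L2norm \<Omega> (\<lambda>x. PD v x - PiS v x)"
  have L: "v \<in> X \<Longrightarrow> L2 \<Omega> (\<lambda>x. PD v x - PiS v x)" for v by (intro L2_diff PD_L2 PiS_L2)
  have Lm: "v \<in> X \<Longrightarrow> (\<lambda>x. PD v x - PiS v x) \<in> borel_measurable (lebesgue_on \<Omega>)" for v
    using L by (simp add: L2_def)
  have P1: "?P (\<lambda>k. v k + w k) \<le> ?P v + ?P w" if v: "v \<in> X" and w: "w \<in> X" for v w
  proof -
    have "?P (\<lambda>k. v k + w k) = L2norm \<Omega> (\<lambda>x. (PD v x - PiS v x) + (PD w x - PiS w x))"
    proof (rule L2norm_cong_AE)
      show "(\<lambda>x. PD (\<lambda>k. v k + w k) x - PiS (\<lambda>k. v k + w k) x) \<in> borel_measurable (lebesgue_on \<Omega>)"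
        by (rule Lm[OF X_add[OF v w]])
      show "(\<lambda>x. (PD v x - PiS v x) + (PD w x - PiS w x)) \<in> borel_measurable (lebesgue_on \<Omega>)"
        using Lm[OF v] Lm[OF w] by simp
      show "AE x in lebesgue_on \<Omega>. PD (\<lambda>k. v k + w k) x - PiS (\<lambda>k. v k + w k) x = (PD v x - PiS v x) + (PD w x - PiS w x)"
        using PiS_add[OF v w] by eventually_elim (use PD_lin[of 1 v 1 w] in simp)
    qed
    also have "\<dots> \<le> ?P v + ?P w" by (rule L2norm_triangle[OF L[OF v] L[OF w]])
    finally show ?thesis .
  qed
  have P2: "?P (\<lambda>k. c * v k) \<le> \<bar>c\<bar> * ?P v" if v: "v \<in> X" for v c
  proof -
    have "?P (\<lambda>k. c * v k) = L2norm \<Omega> (\<lambda>x. c * (PD v x - PiS v x))"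
    proof (rule L2norm_cong_AE)
      show "(\<lambda>x. PD (\<lambda>k. c * v k) x - PiS (\<lambda>k. c * v k) x) \<in> borel_measurable (lebesgue_on \<Omega>)"
        by (rule Lm[OF X_scale[OF v]])
      show "(\<lambda>x. c * (PD v x - PiS v x)) \<in> borel_measurable (lebesgue_on \<Omega>)"
        using Lm[OF v] by simp
      show "AE x in lebesgue_on \<Omega>. PD (\<lambda>k. c * v k) x - PiS (\<lambda>k. c * v k) x = c * (PD v x - PiS v x)"
        using PiS_scale[OF v, of c] by eventually_elim (use PD_lin[of c v 0 v] in \<open>simp add: algebra_simps\<close>)
    qed
    then show ?thesis by (simp add: L2norm_scale)
  qed
  note sq = sup_quotient_bound[of ?P, OF P1 P2 L2norm_nonneg]
  have ae: "al = Sup (insert 0 {?P v / N v | v. v \<in> X \<and> v \<noteq> (\<lambda>i. 0)})"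
    unfolding alphaD_def ..
  show "0 \<le> al" unfolding ae by (rule sq(1))
  show "v \<in> X \<Longrightarrow> ?P v \<le> al * N v" unfolding ae by (rule sq(2))
qed

lemma psi_L2v: "L2v \<Omega> psi" by (rule L2v_add[OF coeff_Gz_L2v F_L2v])

lemma flux_functional_integrable: "v \<in> X \<Longrightarrow> integrable (lebesgue_on \<Omega>) (\<lambda>x. gD v x \<bullet> psi x + PiS v x * divpsi x)"
  using L2v_inner(1)[OF gD_L2 psi_L2v] L2_prod(1)[OF PiS_L2 divpsi_L2] by simp

lemma flux_functional_add: assumes v: "v \<in> X" and w: "w2 \<in> X" shows "flux_functional (\<lambda>k. v k + w2 k) = flux_functional v + flux_functional w2"
proof -
  have "flux_functional (\<lambda>k. v k + w2 k) = intO \<Omega> (\<lambda>x. (gD v x \<bullet> psi x + PiS v x * divpsi x) + (gD w2 x \<bullet> psi x + PiS w2 x * divpsi x))"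
  proof (rule integral_cong_AE)
    show "(\<lambda>x. gD (\<lambda>k. v k + w2 k) x \<bullet> psi x + PiS (\<lambda>k. v k + w2 k) x * divpsi x) \<in> borel_measurable (lebesgue_on \<Omega>)"
      using flux_functional_integrable[OF X_add[OF v w]] by auto
    show "(\<lambda>x. (gD v x \<bullet> psi x + PiS v x * divpsi x) + (gD w2 x \<bullet> psi x + PiS w2 x * divpsi x)) \<in> borel_measurable (lebesgue_on \<Omega>)"
      using flux_functional_integrable[OF v] flux_functional_integrable[OF w] by auto
    show "AE x in lebesgue_on \<Omega>. gD (\<lambda>k. v k + w2 k) x \<bullet> psi x + PiS (\<lambda>k. v k + w2 k) x * divpsi x
        = (gD v x \<bullet> psi x + PiS v x * divpsi x) + (gD w2 x \<bullet> psi x + PiS w2 x * divpsi x)"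
      using gD_add[OF v w] PiS_add[OF v w] by eventually_elim (simp add: inner_add_left algebra_simps)
  qed
  also have "\<dots> = flux_functional v + flux_functional w2" using flux_functional_integrable[OF v] flux_functional_integrable[OF w] by simp
  finally show ?thesis .
qed

lemma flux_functional_scale: assumes v: "v \<in> X" shows "flux_functional (\<lambda>k. c * v k) = c * flux_functional v"
proof -
  have "flux_functional (\<lambda>k. c * v k) = intO \<Omega> (\<lambda>x. c * (gD v x \<bullet> psi x + PiS v x * divpsi x))"
  proof (rule integral_cong_AE)
    show "(\<lambda>x. gD (\<lambda>k. c * v k) x \<bullet> psi x + PiS (\<lambda>k. c * v k) x * divpsi x) \<in> borel_measurable (lebesgue_on \<Omega>)"
      using flux_functional_integrable[OF X_scale[OF v]] by auto
    show "(\<lambda>x. c * (gD v x \<bullet> psi x + PiS v x * divpsi x)) \<in> borel_measurable (lebesgue_on \<Omega>)"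
      using flux_functional_integrable[OF v] by auto
    show "AE x in lebesgue_on \<Omega>. gD (\<lambda>k. c * v k) x \<bullet> psi x + PiS (\<lambda>k. c * v k) x * divpsi x
        = c * (gD v x \<bullet> psi x + PiS v x * divpsi x)"
      using gD_scale[OF v, of c] PiS_scale[OF v, of c] by eventually_elim (simp add: algebra_simps)
  qed
  also have "\<dots> = c * flux_functional v" by simp
  finally show ?thesis .
qed

lemma WD_bounds: "0 \<le> Wd" "v \<in> X \<Longrightarrow> \<bar>flux_functional v\<bar> \<le> Wd * N v"
proof -
  let ?P = "\<lambda>v. \<bar>flux_functional v\<bar>"
  have P1: "?P (\<lambda>k. v k + w k) \<le> ?P v + ?P w" if "v \<in> X" "w \<in> X" for v w
    using flux_functional_add[OF that] by simp
  have P2: "?P (\<lambda>k. c * v k) \<le> \<bar>c\<bar> * ?P v" if "v \<in> X" for v c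
    using flux_functional_scale[OF that] by (simp add: abs_mult)
  note sq = sup_quotient_bound[of ?P, OF P1 P2 abs_ge_zero]
  have we: "Wd = Sup (insert 0 {?P v / N v | v. v \<in> X \<and> v \<noteq> (\<lambda>i. 0)})"
    unfolding WD_def ..
  show "0 \<le> Wd" unfolding we by (rule sq(1))
  show "v \<in> X \<Longrightarrow> ?P v \<le> Wd * N v" unfolding we by (rule sq(2))
qed

end

context mass_lumped_scheme
begin

lemma coeff_error_split:
  "intO \<Omega> (\<lambda>x. (\<Lambda> x *v gD e x) \<bullet> gD e x)
   = intO \<Omega> (\<lambda>x. (\<Lambda> x *v (gD w x - Gz x)) \<bullet> gD e x) + intO \<Omega> (\<lambda>x. (\<Lambda> x *v Gz x) \<bullet> gD e x)
     - intO \<Omega> (\<lambda>x. (\<Lambda> x *v gD z x) \<bullet> gD e x)"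
proof -
  have Ge: "L2v \<Omega> (gD e)" by (rule gD_L2[OF e_in_X])
  have Gwz: "L2v \<Omega> (\<lambda>x. gD w x - Gz x)" by (rule L2v_diff[OF gD_L2[OF w_in_X] Gz_L2v])
  note i = coeff_inner_bound(1)[OF Gwz Ge] coeff_inner_bound(1)[OF Gz_L2v Ge]
    coeff_inner_bound(1)[OF gD_L2[OF z_in_X] Ge]
  have "intO \<Omega> (\<lambda>x. (\<Lambda> x *v gD e x) \<bullet> gD e x) = intO \<Omega> (\<lambda>x. ((\<Lambda> x *v (gD w x - Gz x)) \<bullet> gD e x
      + (\<Lambda> x *v Gz x) \<bullet> gD e x) - (\<Lambda> x *v gD z x) \<bullet> gD e x)"
  proof (rule integral_cong_AE)
    show "AE x in lebesgue_on \<Omega>. (\<Lambda> x *v gD e x) \<bullet> gD e x = ((\<Lambda> x *v (gD w x - Gz x)) \<bullet> gD e x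
        + (\<Lambda> x *v Gz x) \<bullet> gD e x) - (\<Lambda> x *v gD z x) \<bullet> gD e x"
      using gD_diff[OF w_in_X z_in_X]
    proof eventually_elim
      case (elim x)
      have "\<Lambda> x *v gD e x = (\<Lambda> x *v (gD w x - Gz x) + \<Lambda> x *v Gz x) - \<Lambda> x *v gD z x"
        by (simp add: elim matrix_vector_mult_diff_distrib)
      then show ?case by (simp add: inner_diff_left inner_add_left)
    qed
  qed (use coeff_inner_bound(1)[OF Ge Ge] i in auto)
  also have "\<dots> = intO \<Omega> (\<lambda>x. (\<Lambda> x *v (gD w x - Gz x)) \<bullet> gD e x) + intO \<Omega> (\<lambda>x. (\<Lambda> x *v Gz x) \<bullet> gD e x)
     - intO \<Omega> (\<lambda>x. (\<Lambda> x *v gD z x) \<bullet> gD e x)"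
    using i by simp
  finally show ?thesis .
qed

lemma flux_functional_error:
  "flux_functional e = intO \<Omega> (\<lambda>x. (\<Lambda> x *v Gz x) \<bullet> gD e x) + intO \<Omega> (\<lambda>x. F x \<bullet> gD e x)
     + intO \<Omega> (\<lambda>x. PiS e x * (\<beta> (ub x) - f x))"
proof -
  have Ge: "L2v \<Omega> (gD e)" by (rule gD_L2[OF e_in_X])
  have PSe: "L2 \<Omega> (PiS e)" by (rule PiS_L2[OF e_in_X])
  have "intO \<Omega> (\<lambda>x. PiS e x * divpsi x) = intO \<Omega> (\<lambda>x. PiS e x * (\<beta> (ub x) - f x))"
    using L2_prod(1)[OF PSe divpsi_L2] L2_prod(1)[OF PSe L2_diff[OF beta_ub_L2 f_L2]] div_flux_eq[OF flux_div]
    by (intro integral_cong_AE) auto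
  moreover have "(\<lambda>x. gD e x \<bullet> psi x + PiS e x * divpsi x)
      = (\<lambda>x. ((\<Lambda> x *v Gz x) \<bullet> gD e x + F x \<bullet> gD e x) + PiS e x * divpsi x)"
    by (simp add: inner_add_right inner_commute[of "gD e _"])
  ultimately show ?thesis
    using L2v_inner(1)[OF coeff_Gz_L2v Ge] L2v_inner(1)[OF F_L2v Ge] L2_prod(1)[OF PSe divpsi_L2] by simp
qed

text \<open>The scheme tested with the error, rewritten so that each term is a consistency defect.\<close>
lemma scheme_error_identity:
  "- intO \<Omega> (\<lambda>x. (\<Lambda> x *v gD z x) \<bullet> gD e x)
   = intO \<Omega> (\<lambda>x. F x \<bullet> gD e x) + intO \<Omega> (\<lambda>x. PiS e x * (\<beta> (ub x) - f x))
     + intO \<Omega> (\<lambda>x. (PD e x - PiS e x) * (\<beta> (ub x) - f x)) + intO \<Omega> (\<lambda>x. (f x - Q f x) * PD e x)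
     + intO \<Omega> (\<lambda>x. (\<beta> (PD u x) - \<beta> (ub x)) * PD e x)"
proof -
  have PSe: "L2 \<Omega> (PiS e)" by (rule PiS_L2[OF e_in_X])
  have bf: "L2 \<Omega> (\<lambda>x. \<beta> (ub x) - f x)" by (rule L2_diff[OF beta_ub_L2 f_L2])
  note i = L2_prod(1)[OF L2_diff[OF PD_L2 PSe] bf] L2_prod(1)[OF L2_diff[OF f_L2 Qf_L2] PD_L2]
    L2_prod(1)[OF L2_diff[OF beta_PD_u_L2 beta_ub_L2] PD_L2] L2_prod(1)[OF beta_PD_u_L2 PD_L2]
    L2_prod(1)[OF Qf_L2 PD_L2] L2_prod(1)[OF PSe bf]
  have "intO \<Omega> (\<lambda>x. (PD e x - PiS e x) * (\<beta> (ub x) - f x)) + intO \<Omega> (\<lambda>x. (f x - Q f x) * PD e x)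
      + intO \<Omega> (\<lambda>x. (\<beta> (PD u x) - \<beta> (ub x)) * PD e x)
    = intO \<Omega> (\<lambda>x. (PD e x - PiS e x) * (\<beta> (ub x) - f x) + (f x - Q f x) * PD e x
      + (\<beta> (PD u x) - \<beta> (ub x)) * PD e x)"
    using i by simp
  also have "\<dots> = intO \<Omega> (\<lambda>x. \<beta> (PD u x) * PD e x - Q f x * PD e x - PiS e x * (\<beta> (ub x) - f x))"
    by (rule Bochner_Integration.integral_cong) (auto simp: algebra_simps)
  also have "\<dots> = intO \<Omega> (\<lambda>x. \<beta> (PD u x) * PD e x) - intO \<Omega> (\<lambda>x. Q f x * PD e x)
      - intO \<Omega> (\<lambda>x. PiS e x * (\<beta> (ub x) - f x))"
    using i by simp
  finally show ?thesis using scheme_equation[OF e_in_X] by simp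
qed

lemma error_energy_le:
  "lo * (N e)^2 \<le> intO \<Omega> (\<lambda>x. (\<Lambda> x *v (gD w x - Gz x)) \<bullet> gD e x) + flux_functional e
     + intO \<Omega> (\<lambda>x. (PD e x - PiS e x) * (\<beta> (ub x) - f x)) + intO \<Omega> (\<lambda>x. (f x - Q f x) * PD e x)
     + intO \<Omega> (\<lambda>x. (\<beta> (PD u x) - \<beta> (ub x)) * PD e x)"
  using coeff_coercive[OF gD_L2[OF e_in_X]] coeff_error_split flux_functional_error scheme_error_identity
  by linarith

text \<open>Write \<open>PD e = (PD w - \<zeta>(ub)) + (\<zeta>(ub) - \<zeta>(PD u))\<close>; by monotonicity of \<beta> and \<zeta>
  the second part contributes a non-positive term.\<close>
lemma reaction_error_le:
  "intO \<Omega> (\<lambda>x. (\<beta> (PD u x) - \<beta> (ub x)) * PD e x)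
   \<le> (beta_discrete_bound cD bQ + L2norm \<Omega> (\<lambda>x. \<beta> (ub x))) * Sd"
proof -
  let ?d = "\<lambda>x. \<beta> (PD u x) - \<beta> (ub x)"
  have dL: "L2 \<Omega> ?d" by (rule L2_diff[OF beta_PD_u_L2 beta_ub_L2])
  have L1: "L2 \<Omega> (\<lambda>x. \<zeta> (ub x) - PD z x)" by (rule L2_diff[OF zeta_ub_L2 PD_L2])
  have L2: "L2 \<Omega> (\<lambda>x. PD w x - \<zeta> (ub x))" by (rule L2_diff[OF PD_L2 zeta_ub_L2])
  have "intO \<Omega> (\<lambda>x. ?d x * PD e x)
      = intO \<Omega> (\<lambda>x. ?d x * (\<zeta> (ub x) - PD z x) + ?d x * (PD w x - \<zeta> (ub x)))"
    by (rule Bochner_Integration.integral_cong) (auto simp: algebra_simps PD_lin[of 1 w "-1" z, simplified])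
  also have "\<dots> = intO \<Omega> (\<lambda>x. ?d x * (\<zeta> (ub x) - PD z x)) + intO \<Omega> (\<lambda>x. ?d x * (PD w x - \<zeta> (ub x)))"
    using L2_prod(1)[OF dL L1] L2_prod(1)[OF dL L2] by simp
  also have "intO \<Omega> (\<lambda>x. ?d x * (\<zeta> (ub x) - PD z x)) \<le> 0"
  proof -
    have "0 \<le> - (?d x * (\<zeta> (ub x) - PD z x))" if "x \<in> \<Omega>" for x
      using mono_diff_mult_nonneg[OF beta_mono zeta_mono, of "PD u x" "ub x"] that
      by (simp add: PD_z algebra_simps)
    then have "0 \<le> intO \<Omega> (\<lambda>x. - (?d x * (\<zeta> (ub x) - PD z x)))"
      by (intro integral_nonneg_AE AE_I2) simp
    then show ?thesis by simp
  qed
  also have "intO \<Omega> (\<lambda>x. ?d x * (PD w x - \<zeta> (ub x))) \<le> L2norm \<Omega> ?d * L2norm \<Omega> (\<lambda>x. PD w x - \<zeta> (ub x))"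
    using L2_prod(2)[OF dL L2] by simp
  also have "\<dots> \<le> (beta_discrete_bound cD bQ + L2norm \<Omega> (\<lambda>x. \<beta> (ub x))) * Sd"
  proof (rule mult_mono)
    show "L2norm \<Omega> ?d \<le> beta_discrete_bound cD bQ + L2norm \<Omega> (\<lambda>x. \<beta> (ub x))"
      using L2norm_triangle_diff[OF beta_PD_u_L2 beta_ub_L2] L2norm_beta_PD_u_le by simp
  qed (use SD_ge(2) L2norm_beta_PD_u_le L2norm_nonneg[of \<Omega> "\<lambda>x. \<beta> (PD u x)"]
      L2norm_nonneg[of \<Omega> "\<lambda>x. \<beta> (ub x)"] L2norm_nonneg[of \<Omega> "\<lambda>x. PD w x - \<zeta> (ub x)"] in auto)
  finally show ?thesis by simp
qed

end

context mass_lumped_scheme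
begin

lemma error_quadratic_ineq:
  "lo * (N e)^2 \<le> (hi * Sd + Wd + al * L2norm \<Omega> (\<lambda>x. \<beta> (ub x) - f x) + cD * L2norm \<Omega> (\<lambda>x. Q f x - f x)) * N e
     + (beta_discrete_bound cD bQ + L2norm \<Omega> (\<lambda>x. \<beta> (ub x))) * Sd"
proof -
  have Ge: "L2v \<Omega> (gD e)" by (rule gD_L2[OF e_in_X])
  have PSe: "L2 \<Omega> (\<lambda>x. PD e x - PiS e x)" by (rule L2_diff[OF PD_L2 PiS_L2[OF e_in_X]])
  have "intO \<Omega> (\<lambda>x. (\<Lambda> x *v (gD w x - Gz x)) \<bullet> gD e x) \<le> hi * L2normv \<Omega> (\<lambda>x. gD w x - Gz x) * N e"
    using coeff_inner_bound(2)[OF L2v_diff[OF gD_L2[OF w_in_X] Gz_L2v] Ge] by simp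
  also have "\<dots> \<le> hi * Sd * N e"
    using SD_ge(1) hi_pos L2normv_nonneg[of \<Omega> "gD e"] by (intro mult_right_mono mult_left_mono) auto
  finally have T1: "intO \<Omega> (\<lambda>x. (\<Lambda> x *v (gD w x - Gz x)) \<bullet> gD e x) \<le> hi * Sd * N e" .
  have "intO \<Omega> (\<lambda>x. (PD e x - PiS e x) * (\<beta> (ub x) - f x))
      \<le> L2norm \<Omega> (\<lambda>x. PD e x - PiS e x) * L2norm \<Omega> (\<lambda>x. \<beta> (ub x) - f x)"
    using L2_prod(2)[OF PSe L2_diff[OF beta_ub_L2 f_L2]] by simp
  also have "\<dots> \<le> al * N e * L2norm \<Omega> (\<lambda>x. \<beta> (ub x) - f x)"
    by (rule mult_right_mono[OF alphaD_bounds(2)[OF e_in_X] L2norm_nonneg])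
  finally have T3: "intO \<Omega> (\<lambda>x. (PD e x - PiS e x) * (\<beta> (ub x) - f x))
      \<le> al * L2norm \<Omega> (\<lambda>x. \<beta> (ub x) - f x) * N e" by (simp add: algebra_simps)
  have "L2norm \<Omega> (\<lambda>x. f x - Q f x) = L2norm \<Omega> (\<lambda>x. Q f x - f x)"
    using L2norm_uminus[of \<Omega> "\<lambda>x. Q f x - f x"] by simp
  then have "intO \<Omega> (\<lambda>x. (f x - Q f x) * PD e x) \<le> L2norm \<Omega> (\<lambda>x. Q f x - f x) * L2norm \<Omega> (PD e)"
    using L2_prod(2)[OF L2_diff[OF f_L2 Qf_L2] PD_L2, of e] by simp
  also have "\<dots> \<le> L2norm \<Omega> (\<lambda>x. Q f x - f x) * (cD * N e)"
    by (rule mult_left_mono[OF L2norm_PD_le[OF e_in_X] L2norm_nonneg])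
  finally have T4: "intO \<Omega> (\<lambda>x. (f x - Q f x) * PD e x) \<le> cD * L2norm \<Omega> (\<lambda>x. Q f x - f x) * N e"
    by (simp add: algebra_simps)
  have "flux_functional e \<le> Wd * N e" using WD_bounds(2)[OF e_in_X] by simp
  then show ?thesis
    using error_energy_le T1 T3 T4 reaction_error_le by (simp add: algebra_simps)
qed

lemma error_estimate:
  "N e \<le> error_constant cD bQ *
     (Wd + Sd + al + L2norm \<Omega> (\<lambda>x. \<beta> (Q ub x) - \<beta> (ub x)) + L2norm \<Omega> (\<lambda>x. Q f x - f x)
      + sqrt (Sd + L2norm \<Omega> (\<lambda>x. \<zeta> (ub x) - \<zeta> (Q ub x))))"
proof -
  let ?Kf = "L2norm \<Omega> (\<lambda>x. \<beta> (ub x) - f x)" and ?Rq = "L2norm \<Omega> (\<lambda>x. Q f x - f x)"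
  let ?A = "hi * Sd + Wd + al * ?Kf + cD * ?Rq"
  let ?B = "beta_discrete_bound cD bQ + L2norm \<Omega> (\<lambda>x. \<beta> (ub x))"
  let ?T = "Wd + Sd + al + L2norm \<Omega> (\<lambda>x. \<beta> (Q ub x) - \<beta> (ub x)) + ?Rq
     + sqrt (Sd + L2norm \<Omega> (\<lambda>x. \<zeta> (ub x) - \<zeta> (Q ub x)))"
  have nonneg: "0 \<le> Sd" "0 \<le> Wd" "0 \<le> al" "0 \<le> cD" "0 \<le> ?Kf" "0 \<le> ?Rq"
    "0 \<le> L2norm \<Omega> (\<lambda>x. \<beta> (Q ub x) - \<beta> (ub x))" "0 \<le> L2norm \<Omega> (\<lambda>x. \<zeta> (ub x) - \<zeta> (Q ub x))"
    using SD_nonneg WD_bounds(1) alphaD_bounds(1) cD_nonneg by (simp_all add: L2norm_nonneg)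
  have B0: "0 \<le> ?B"
    using L2norm_beta_PD_u_le L2norm_nonneg[of \<Omega> "\<lambda>x. \<beta> (PD u x)"] L2norm_nonneg[of \<Omega> "\<lambda>x. \<beta> (ub x)"]
    by linarith
  have "N e \<le> ?A / lo + sqrt (?B * Sd / lo)"
    using le_of_quadratic_ineq[OF lo_pos _ _ error_quadratic_ineq] nonneg B0 hi_pos by simp
  also have "?A / lo \<le> (hi + 1 + ?Kf + cD) / lo * (Wd + Sd + al + ?Rq)"
  proof -
    have "?A \<le> (hi + 1 + ?Kf + cD) * (Wd + Sd + al + ?Rq)"
      using nonneg hi_pos by (simp add: algebra_simps)
    then show ?thesis using lo_pos by (simp add: divide_right_mono)
  qed
  also have "sqrt (?B * Sd / lo) = sqrt (?B / lo) * sqrt Sd" by (simp add: real_sqrt_mult[symmetric])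
  also have "\<dots> \<le> sqrt (?B / lo) * sqrt (Sd + L2norm \<Omega> (\<lambda>x. \<zeta> (ub x) - \<zeta> (Q ub x)))"
    using nonneg B0 lo_pos by (intro mult_left_mono real_sqrt_le_mono) auto
  also have "(hi + 1 + ?Kf + cD) / lo * (Wd + Sd + al + ?Rq)
      + sqrt (?B / lo) * sqrt (Sd + L2norm \<Omega> (\<lambda>x. \<zeta> (ub x) - \<zeta> (Q ub x)))
    \<le> (hi + 1 + ?Kf + cD) / lo * ?T + sqrt (?B / lo) * ?T"
  proof (rule add_mono; rule mult_left_mono)
    show "Wd + Sd + al + ?Rq \<le> ?T" "sqrt (Sd + L2norm \<Omega> (\<lambda>x. \<zeta> (ub x) - \<zeta> (Q ub x))) \<le> ?T"
      using nonneg by simp_all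
  qed (use nonneg hi_pos lo_pos B0 in auto)
  finally show ?thesis by (simp add: error_constant_def algebra_simps)
qed

end

lemma (in monotone_problem) mass_lumped_error_estimate:
  assumes "mass_lumped_GD \<Omega> I Ib U PiS gD Q"
    and "GS_sol \<Omega> \<zeta> \<beta> \<Lambda> f F (XD0 I Ib) (PiPC I U) gD Q u"
    and "CD \<Omega> (XD0 I Ib) (PiPC I U) gD \<le> cD" and "L2norm \<Omega> (Q f) \<le> bQ"
    and "weak_div \<Omega> (\<lambda>x. \<Lambda> x *v Gz x + F x) divpsi"
    and "w \<in> XD0 I Ib"
    and "\<forall>v\<in>XD0 I Ib.
         L2normv \<Omega> (\<lambda>x. gD w x - Gz x) + L2norm \<Omega> (\<lambda>x. PiPC I U w x - \<zeta> (ub x))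
         \<le> L2normv \<Omega> (\<lambda>x. gD v x - Gz x) + L2norm \<Omega> (\<lambda>x. PiPC I U v x - \<zeta> (ub x))"
  shows "L2normv \<Omega> (gD (\<lambda>i. w i - \<zeta> (u i)))
    \<le> error_constant cD bQ *
      (WD \<Omega> (XD0 I Ib) PiS gD (\<lambda>x. \<Lambda> x *v Gz x + F x) divpsi
       + SD \<Omega> (XD0 I Ib) (PiPC I U) gD (\<lambda>x. \<zeta> (ub x)) Gz
       + alphaD \<Omega> (XD0 I Ib) (PiPC I U) PiS gD
       + L2norm \<Omega> (\<lambda>x. \<beta> (Q ub x) - \<beta> (ub x)) + L2norm \<Omega> (\<lambda>x. Q f x - f x)
       + sqrt (SD \<Omega> (XD0 I Ib) (PiPC I U) gD (\<lambda>x. \<zeta> (ub x)) Gz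
               + L2norm \<Omega> (\<lambda>x. \<zeta> (ub x) - \<zeta> (Q ub x))))"
proof -
  interpret mass_lumped_scheme \<Omega> \<Lambda> lo hi \<zeta> \<beta> f F ub Gz M0 M1 K0 K1 I Ib U PiS gD Q u w divpsi cD bQ
    using assms by unfold_locales
  show ?thesis by (rule error_estimate)
qed

theorem mainTheorem5:
  fixes \<Omega> :: "(real^'n) set"
    and \<zeta> \<beta> :: "real \<Rightarrow> real"
    and \<Lambda> :: "real^'n \<Rightarrow> real^'n^'n"
    and lam_lo lam_hi :: real
    and f :: "real^'n \<Rightarrow> real" and F :: "real^'n \<Rightarrow> real^'n"
    and ub :: "real^'n \<Rightarrow> real" and Gz :: "real^'n \<Rightarrow> real^'n"
  assumes A: "assumptions_A \<Omega> \<zeta> \<beta> \<Lambda> lam_lo lam_hi f F"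
    and W: "weak_sol \<Omega> \<zeta> \<beta> \<Lambda> f F ub Gz"
  shows "\<forall>cD bB bQ. \<exists>C.
    \<forall>I Ib U PiS gD Q u divpsi w.
      mass_lumped_GD \<Omega> I Ib U PiS gD Q \<and>
      CD \<Omega> (XD0 I Ib) (PiPC I U) gD \<le> cD \<and>
      L2norm \<Omega> (\<lambda>x. \<beta> (Q ub x)) \<le> bB \<and>
      L2norm \<Omega> (Q f) \<le> bQ \<and>
      GS_sol \<Omega> \<zeta> \<beta> \<Lambda> f F (XD0 I Ib) (PiPC I U) gD Q u \<and>
      weak_div \<Omega> (\<lambda>x. \<Lambda> x *v Gz x + F x) divpsi \<and>
      w \<in> XD0 I Ib \<and>
      (\<forall>v\<in>XD0 I Ib.
         L2normv \<Omega> (\<lambda>x. gD w x - Gz x) + L2norm \<Omega> (\<lambda>x. PiPC I U w x - \<zeta> (ub x))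
         \<le> L2normv \<Omega> (\<lambda>x. gD v x - Gz x) + L2norm \<Omega> (\<lambda>x. PiPC I U v x - \<zeta> (ub x)))
      \<longrightarrow>
      L2normv \<Omega> (gD (\<lambda>i. w i - \<zeta> (u i)))
      \<le> C * ( WD \<Omega> (XD0 I Ib) PiS gD (\<lambda>x. \<Lambda> x *v Gz x + F x) divpsi
             + SD \<Omega> (XD0 I Ib) (PiPC I U) gD (\<lambda>x. \<zeta> (ub x)) Gz
             + alphaD \<Omega> (XD0 I Ib) (PiPC I U) PiS gD
             + L2norm \<Omega> (\<lambda>x. \<beta> (Q ub x) - \<beta> (ub x))
             + L2norm \<Omega> (\<lambda>x. Q f x - f x)
             + sqrt (SD \<Omega> (XD0 I Ib) (PiPC I U) gD (\<lambda>x. \<zeta> (ub x)) Gz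
                     + L2norm \<Omega> (\<lambda>x. \<zeta> (ub x) - \<zeta> (Q ub x))))"
proof -
  obtain M0 M1 K0 K1 where P: "monotone_problem \<Omega> \<Lambda> lam_lo lam_hi \<zeta> \<beta> f F ub Gz M0 M1 K0 K1"
    using A W by (rule monotone_problem_if_assumptions_A)
  show ?thesis
    using monotone_problem.mass_lumped_error_estimate[OF P] by blast
qed

end
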